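(* Assume the synchronous bandit is unichain and strictly indexable (states labeled $\nu_1>\dots>\nu_d$), and let $\rho(\mathbf m)$ be the instantaneous bandit-averaged reward of WIP when the $N$-bandit system is in configuration $\mathbf m$. Then (i) for all $\mathbf m\in\Delta^d$, $$\rho(\mathbf m)=\sum_{i=1}^{s(\mathbf m)-1} m_i R^1_{i} + \Big(\alpha-\sum_{i=1}^{s(\mathbf m)-1}m_i\Big)R^1_{s(\mathbf m)} + \Big(\sum_{i=1}^{s(\mathbf m)}m_i - \alpha\Big)R^0_{s(\mathbf m)} + \sum_{i=s(\mathbf m)+1}^{d} m_i R^0_{i},$$ so $\rho$ is affine on each zone $\mathcal Z_i=\{\mathbf m: s(\mathbf m)=i\}$; and (ii) $\rho(\mathbf m^* )=V^{(1)}_{\mathrm{rel}}(\alpha)$, where $\mathbf m^*$ is the unique fixed point of $\phi$.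
   Context: Synchronous restless bandit model: $d\times d$ stochastic matrices $\mathbf P^0,\mathbf P^1$, rewards $\mathbf R^0,\mathbf R^1\in\mathbb R^d$, $\alpha\in(0,1)$; $N$ bandits with $\alpha N\in\mathbb N$ evolve independently given actions with $\mathbb P(S_n(t+1)=j\mid S_n(t)=i,a_n(t)=a)=P^a_{ij}$, reward $R^a_i$ per bandit per step. $V^{(1)}_{\mathrm{rel}}(\alpha)$ is the supremum over stationary Markov single-bandit policies of the long-run average expected reward subject to the long-run fraction of active time being $\alpha$. Unichain: under every policy a single bandit's states form one recurrent class. Indexability/Whittle index: the subsidy-$\nu$ problem is the single-bandit MDP where action $0$ in state $i$ earns $R^0_i+\nu$ and action $1$ earns $R^1_i$ (average reward); $\omega(\nu)$ the set of states where some optimal policy is passive; indexable if $\omega(\nu)\subseteq\omega(\nu')$ for $\nu\le\nu'$; $\nu_i=\inf\{\nu:i\in\omega(\nu)\}$; strictly indexable: distinct indices. WIP activates at each step the $\alpha N$ bandits with highest indices. $\Delta^d=\{\mathbf m\in[0,1]^d:\sum m_i=1\}$; configuration = vector of fractions of bandits in each state; $s(\mathbf m)$ the unique $s$ with $\sum_{i<s}m_i\le\alpha<\sum_{i\le s}m_i$; $\phi_j(\mathbf m)=\sum_{i=1}^{s(\mathbf m)-1} m_i P^1_{ij} + (\alpha-\sum_{i=1}^{s(\mathbf m)-1}m_i)P^1_{s(\mathbf m)j} + (\sum_{i=1}^{s(\mathbf m)}m_i - \alpha)P^0_{s(\mathbf m)j} + \sum_{i=s(\mathbf m)+1}^{d}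 m_i P^0_{ij}$, which has a unique fixed point $\mathbf m^*$ under these assumptions. *)

theory Defs
  imports Complex_Main
begin

text \<open>States of a single bandit are labelled 1..d. Matrices are functions
  nat => nat => real, vectors nat => real; only indices in {1..d} matter.\<close>

definition stochastic :: "nat \<Rightarrow> (nat \<Rightarrow> nat \<Rightarrow> real) \<Rightarrow> bool" where
  "stochastic d P \<longleftrightarrow> (\<forall>i\<in>{1..d}. \<forall>j\<in>{1..d}. 0 \<le> P i j) \<and>
                       (\<forall>i\<in>{1..d}. (\<Sum>j=1..d. P i j) = 1)"

fun mpow :: "nat \<Rightarrow> (nat \<Rightarrow> nat \<Rightarrow> real) \<Rightarrow> nat \<Rightarrow> nat \<Rightarrow> nat \<Rightarrow> real" where
  "mpow d Q 0 i j = (if i = j then 1 else 0)"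
| "mpow d Q (Suc t) i j = (\<Sum>k=1..d. mpow d Q t i k * Q k j)"

text \<open>Stationary Markov (randomised) single-bandit policy: pol i is the
  probability of being active in state i.\<close>
definition policy :: "nat \<Rightarrow> (nat \<Rightarrow> real) \<Rightarrow> bool" where
  "policy d pol \<longleftrightarrow> (\<forall>i\<in>{1..d}. 0 \<le> pol i \<and> pol i \<le> 1)"

definition pol_matrix :: "(nat \<Rightarrow> nat \<Rightarrow> real) \<Rightarrow> (nat \<Rightarrow> nat \<Rightarrow> real) \<Rightarrow> (nat \<Rightarrow> real)
    \<Rightarrow> nat \<Rightarrow> nat \<Rightarrow> real" where
  "pol_matrix P0 P1 pol i j = (1 - pol i) * P0 i j + pol i * P1 i j"

definition pol_reward :: "(nat \<Rightarrow> real) \<Rightarrow> (nat \<Rightarrow> real) \<Rightarrow> (nat \<Rightarrow> real) \<Rightarrow> nat \<Rightarrow> real" where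
  "pol_reward R0 R1 pol i = (1 - pol i) * R0 i + pol i * R1 i"

definition reach :: "nat \<Rightarrow> (nat \<Rightarrow> nat \<Rightarrow> real) \<Rightarrow> nat \<Rightarrow> nat \<Rightarrow> bool" where
  "reach d Q i j \<longleftrightarrow> (\<exists>t. mpow d Q t i j > 0)"

definition recurrent :: "nat \<Rightarrow> (nat \<Rightarrow> nat \<Rightarrow> real) \<Rightarrow> nat \<Rightarrow> bool" where
  "recurrent d Q i \<longleftrightarrow> i \<in> {1..d} \<and> (\<forall>j\<in>{1..d}. reach d Q i j \<longrightarrow> reach d Q j i)"

definition single_recurrent_class :: "nat \<Rightarrow> (nat \<Rightarrow> nat \<Rightarrow> real) \<Rightarrow> bool" where
  "single_recurrent_class d Q \<longleftrightarrow>
     (\<forall>i j. recurrent d Q i \<and> recurrent d Q j \<longrightarrow> reach d Q i j)"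

definition unichain :: "nat \<Rightarrow> (nat \<Rightarrow> nat \<Rightarrow> real) \<Rightarrow> (nat \<Rightarrow> nat \<Rightarrow> real) \<Rightarrow> bool" where
  "unichain d P0 P1 \<longleftrightarrow>
     (\<forall>pol. policy d pol \<longrightarrow> single_recurrent_class d (pol_matrix P0 P1 pol))"

definition longrun_avg :: "nat \<Rightarrow> (nat \<Rightarrow> nat \<Rightarrow> real) \<Rightarrow> (nat \<Rightarrow> real) \<Rightarrow> nat \<Rightarrow> real" where
  "longrun_avg d Q f i0 =
     lim (\<lambda>T. (\<Sum>t<T. \<Sum>j=1..d. mpow d Q t i0 j * f j) / real T)"

definition V_rel :: "nat \<Rightarrow> (nat \<Rightarrow> nat \<Rightarrow> real) \<Rightarrow> (nat \<Rightarrow> nat \<Rightarrow> real) \<Rightarrow>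
    (nat \<Rightarrow> real) \<Rightarrow> (nat \<Rightarrow> real) \<Rightarrow> real \<Rightarrow> real" where
  "V_rel d P0 P1 R0 R1 alpha =
     Sup {longrun_avg d (pol_matrix P0 P1 pol) (pol_reward R0 R1 pol) i0 | pol i0.
            policy d pol \<and> i0 \<in> {1..d} \<and>
            longrun_avg d (pol_matrix P0 P1 pol) pol i0 = alpha}"

definition bellman_sol :: "nat \<Rightarrow> (nat \<Rightarrow> nat \<Rightarrow> real) \<Rightarrow> (nat \<Rightarrow> nat \<Rightarrow> real) \<Rightarrow>
    (nat \<Rightarrow> real) \<Rightarrow> (nat \<Rightarrow> real) \<Rightarrow> real \<Rightarrow> real \<Rightarrow> (nat \<Rightarrow> real) \<Rightarrow> bool" where
  "bellman_sol d P0 P1 R0 R1 nu g h \<longleftrightarrow>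
     (\<forall>i\<in>{1..d}. g + h i = max (R0 i + nu + (\<Sum>j=1..d. P0 i j * h j))
                                 (R1 i + (\<Sum>j=1..d. P1 i j * h j)))"

definition omega :: "nat \<Rightarrow> (nat \<Rightarrow> nat \<Rightarrow> real) \<Rightarrow> (nat \<Rightarrow> nat \<Rightarrow> real) \<Rightarrow>
    (nat \<Rightarrow> real) \<Rightarrow> (nat \<Rightarrow> real) \<Rightarrow> real \<Rightarrow> nat set" where
  "omega d P0 P1 R0 R1 nu = {i \<in> {1..d}. \<exists>g h. bellman_sol d P0 P1 R0 R1 nu g h \<and>
       R0 i + nu + (\<Sum>j=1..d. P0 i j * h j) \<ge> R1 i + (\<Sum>j=1..d. P1 i j * h j)}"

definition indexable :: "nat \<Rightarrow> (nat \<Rightarrow> nat \<Rightarrow> real) \<Rightarrow> (nat \<Rightarrow> nat \<Rightarrow> real) \<Rightarrow>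
    (nat \<Rightarrow> real) \<Rightarrow> (nat \<Rightarrow> real) \<Rightarrow> bool" where
  "indexable d P0 P1 R0 R1 \<longleftrightarrow>
     (\<forall>nu nu'. nu \<le> nu' \<longrightarrow> omega d P0 P1 R0 R1 nu \<subseteq> omega d P0 P1 R0 R1 nu')"

definition whittle_index :: "nat \<Rightarrow> (nat \<Rightarrow> nat \<Rightarrow> real) \<Rightarrow> (nat \<Rightarrow> nat \<Rightarrow> real) \<Rightarrow>
    (nat \<Rightarrow> real) \<Rightarrow> (nat \<Rightarrow> real) \<Rightarrow> nat \<Rightarrow> real" where
  "whittle_index d P0 P1 R0 R1 i = Inf {nu. i \<in> omega d P0 P1 R0 R1 nu}"

definition strictly_indexable :: "nat \<Rightarrow> (nat \<Rightarrow> nat \<Rightarrow> real) \<Rightarrow> (nat \<Rightarrow> nat \<Rightarrow> real) \<Rightarrow>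
    (nat \<Rightarrow> real) \<Rightarrow> (nat \<Rightarrow> real) \<Rightarrow> bool" where
  "strictly_indexable d P0 P1 R0 R1 \<longleftrightarrow> indexable d P0 P1 R0 R1 \<and>
     inj_on (whittle_index d P0 P1 R0 R1) {1..d}"

text \<open>Configurations (fractions of bandits in each state).\<close>
definition simplex :: "nat \<Rightarrow> (nat \<Rightarrow> real) set" where
  "simplex d = {m. (\<forall>i\<in>{1..d}. 0 \<le> m i \<and> m i \<le> 1) \<and> (\<Sum>i=1..d. m i) = 1}"

definition s_of :: "nat \<Rightarrow> real \<Rightarrow> (nat \<Rightarrow> real) \<Rightarrow> nat" where
  "s_of d alpha m = (THE s. s \<in> {1..d} \<and> (\<Sum>i=1..<s. m i) \<le> alpha \<and> alpha < (\<Sum>i=1..s. m i))"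

definition phi :: "nat \<Rightarrow> (nat \<Rightarrow> nat \<Rightarrow> real) \<Rightarrow> (nat \<Rightarrow> nat \<Rightarrow> real) \<Rightarrow> real \<Rightarrow>
    (nat \<Rightarrow> real) \<Rightarrow> nat \<Rightarrow> real" where
  "phi d P0 P1 alpha m j = (let s = s_of d alpha m in
      (\<Sum>i=1..<s. m i * P1 i j) + (alpha - (\<Sum>i=1..<s. m i)) * P1 s j
      + ((\<Sum>i=1..s. m i) - alpha) * P0 s j + (\<Sum>i=Suc s..d. m i * P0 i j))"

text \<open>WIP in configuration m: activates (a fraction alpha of the bandits) the bandits
  with the highest indices nu; wip_active gives the fraction of all bandits that are
  in state i and active.\<close>
definition wip_active :: "nat \<Rightarrow> (nat \<Rightarrow> real) \<Rightarrow> real \<Rightarrow> (nat \<Rightarrow> real) \<Rightarrow> nat \<Rightarrow> real" where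
  "wip_active d nu alpha m i =
     min (m i) (max 0 (alpha - (\<Sum>j\<in>{j\<in>{1..d}. nu j > nu i}. m j)))"

definition wip_reward :: "nat \<Rightarrow> (nat \<Rightarrow> real) \<Rightarrow> (nat \<Rightarrow> real) \<Rightarrow> (nat \<Rightarrow> real) \<Rightarrow> real \<Rightarrow>
    (nat \<Rightarrow> real) \<Rightarrow> real" where
  "wip_reward d nu R0 R1 alpha m =
     (\<Sum>i=1..d. wip_active d nu alpha m i * R1 i + (m i - wip_active d nu alpha m i) * R0 i)"

end

(*
  Part (i) is bookkeeping: with the states listed by decreasing index, WIP activates every
  bandit in the states 1, ..., s - 1, the fraction alpha - (m_1 + ... + m_(s-1)) of the population
  in state s = s(m), and nobody in the states above s. This is the randomised threshold policy at s.

  Part (ii): a fixed point m of phi is a stationary distribution of that threshold policy, so the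
  policy has long-run activity alpha and long-run reward rho(m). At the subsidy nu_s the Bellman
  equation of the subsidy problem has a solution against which the states below s prefer activity,
  the states above s prefer passivity and s is indifferent; this comes from indexability, the
  ordering of the indices and the closedness in the subsidy of the set where such solutions exist.
  The threshold policy is therefore optimal for the subsidy problem, with gain
  g = rho(m) + nu_s (1 - alpha), while by Lagrangian weak duality every policy of activity alpha
  earns at most g - nu_s (1 - alpha). So rho(m) is the maximum defining V_rel.

  Solvability and uniqueness of the Poisson and Bellman equations of unichain models rest on the
  minimum principle for superharmonic functions and on policy iteration.
*)

theory Submission
  imports Defs "Jordan_Normal_Form.Determinant"
begin

section \<open>Finite Markov chains\<close>

definition mat_apply :: "nat \<Rightarrow> (nat \<Rightarrow> nat \<Rightarrow> real) \<Rightarrow> (nat \<Rightarrow> real) \<Rightarrow> nat \<Rightarrow> real" where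
  "mat_apply d Q h i = (\<Sum>j=1..d. Q i j * h j)"

definition closed_states :: "nat \<Rightarrow> (nat \<Rightarrow> nat \<Rightarrow> real) \<Rightarrow> nat set \<Rightarrow> bool" where
  "closed_states d Q C \<longleftrightarrow> C \<subseteq> {1..d} \<and> (\<forall>i\<in>C. \<forall>j\<in>{1..d}. Q i j > 0 \<longrightarrow> j \<in> C)"

lemma stochasticD:
  assumes "stochastic d Q"
  shows "\<And>i j. i \<in> {1..d} \<Longrightarrow> j \<in> {1..d} \<Longrightarrow> 0 \<le> Q i j"
    and "\<And>i. i \<in> {1..d} \<Longrightarrow> (\<Sum>j=1..d. Q i j) = 1"
  using assms unfolding stochastic_def by auto

lemma mpow_nonneg:
  assumes "stochastic d Q" "j \<in> {1..d}"
  shows "0 \<le> mpow d Q t i j"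
  using assms(2)
proof (induction t arbitrary: j)
  case (Suc t)
  then show ?case
    using stochasticD(1)[OF assms(1) _ Suc.prems] by (auto intro!: sum_nonneg)
qed simp

lemma mpow_row_sum:
  assumes "stochastic d Q" "i \<in> {1..d}"
  shows "(\<Sum>j=1..d. mpow d Q t i j) = 1"
proof (induction t)
  case 0
  then show ?case using assms(2) by simp
next
  case (Suc t)
  have "(\<Sum>j=1..d. mpow d Q (Suc t) i j) = (\<Sum>k=1..d. mpow d Q t i k * (\<Sum>j=1..d. Q k j))"
    by (simp add: sum_distrib_left) (rule sum.swap)
  also have "\<dots> = (\<Sum>k=1..d. mpow d Q t i k)"
    using stochasticD(2)[OF assms(1)] by simp
  finally show ?case using Suc by simp
qed

lemma mpow_le_one:
  assumes "stochastic d Q" "i \<in> {1..d}" "j \<in> {1..d}"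
  shows "mpow d Q t i j \<le> 1"
proof -
  have "mpow d Q t i j \<le> (\<Sum>j=1..d. mpow d Q t i j)"
    by (rule member_le_sum) (use assms mpow_nonneg in auto)
  then show ?thesis using mpow_row_sum[OF assms(1,2)] by simp
qed

lemma mpow_add:
  assumes "k \<in> {1..d}"
  shows "mpow d Q (t + u) i k = (\<Sum>j=1..d. mpow d Q t i j * mpow d Q u j k)"
  using assms
proof (induction u arbitrary: k)
  case 0
  then show ?case by (simp add: if_distrib cong: if_cong)
next
  case (Suc u)
  have "mpow d Q (t + Suc u) i k = (\<Sum>l=1..d. (\<Sum>j=1..d. mpow d Q t i j * mpow d Q u j l) * Q l k)"
    using Suc.IH by simp
  also have "\<dots> = (\<Sum>j=1..d. mpow d Q t i j * (\<Sum>l=1..d. mpow d Q u j l * Q l k))"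
    by (simp add: sum_distrib_left sum_distrib_right mult.assoc) (rule sum.swap)
  finally show ?case by simp
qed

lemma reach_refl: "reach d Q i i"
  unfolding reach_def by (rule exI[of _ 0]) simp

lemma reach_trans:
  assumes "stochastic d Q" "j \<in> {1..d}" "k \<in> {1..d}" "reach d Q i j" "reach d Q j k"
  shows "reach d Q i k"
proof -
  obtain t u where t: "mpow d Q t i j > 0" and u: "mpow d Q u j k > 0"
    using assms(4,5) unfolding reach_def by auto
  have "0 < mpow d Q t i j * mpow d Q u j k" using t u by simp
  also have "\<dots> \<le> (\<Sum>l=1..d. mpow d Q t i l * mpow d Q u l k)"
    by (rule member_le_sum) (use assms(1-3) mpow_nonneg in auto)
  also have "\<dots> = mpow d Q (t + u) i k" using mpow_add[OF assms(3)] by simp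
  finally show ?thesis unfolding reach_def by blast
qed

lemma closed_states_mpow:
  assumes "stochastic d Q" "closed_states d Q C" "i \<in> C" "j \<in> {1..d}" "mpow d Q t i j > 0"
  shows "j \<in> C"
  using assms(4,5)
proof (induction t arbitrary: j)
  case 0
  then show ?case using assms(3) by (simp split: if_splits)
next
  case (Suc t)
  have "\<exists>k\<in>{1..d}. 0 < mpow d Q t i k * Q k j"
  proof (rule ccontr)
    assume "\<not> ?thesis"
    then have "(\<Sum>k=1..d. mpow d Q t i k * Q k j) \<le> 0" by (intro sum_nonpos) (auto simp: not_less)
    then show False using Suc.prems(2) by simp
  qed
  then obtain k where k: "k \<in> {1..d}" and pos: "0 < mpow d Q t i k * Q k j" by blast
  have "mpow d Q t i k > 0" and Qkj: "Q k j > 0"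
    using pos mpow_nonneg[OF assms(1) k] stochasticD(1)[OF assms(1) k Suc.prems(1)]
    by (auto simp: zero_less_mult_iff)
  then have "k \<in> C" using Suc.IH k by blast
  then show ?case using assms(2) Suc.prems(1) Qkj unfolding closed_states_def by blast
qed

lemma closed_states_reach:
  assumes "stochastic d Q" "closed_states d Q C" "i \<in> C" "j \<in> {1..d}" "reach d Q i j"
  shows "j \<in> C"
  using assms(5) closed_states_mpow[OF assms(1-4)] unfolding reach_def by auto

text \<open>A state of a closed set reaching the fewest states is recurrent.\<close>

lemma closed_states_has_recurrent:
  assumes st: "stochastic d Q" and C: "closed_states d Q C" and "C \<noteq> {}"
  shows "\<exists>w\<in>C. recurrent d Q w"
proof -
  define reached where "reached i = {j\<in>{1..d}. reach d Q i j}" for i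
  obtain i0 where "i0 \<in> C" using \<open>C \<noteq> {}\<close> by blast
  then obtain i where i: "i \<in> C" and fewest: "\<And>j. j \<in> C \<Longrightarrow> card (reached i) \<le> card (reached j)"
    using ex_has_least_nat[of "\<lambda>i. i \<in> C" i0 "\<lambda>i. card (reached i)"] by auto
  have id: "i \<in> {1..d}" using i C unfolding closed_states_def by auto
  have "reach d Q j i" if j: "j \<in> {1..d}" and ij: "reach d Q i j" for j
  proof -
    have sub: "reached j \<subseteq> reached i"
      unfolding reached_def using reach_trans[OF st j _ ij] by auto
    have fin: "finite (reached i)" by (simp add: reached_def)
    have "card (reached i) \<le> card (reached j)"
      using fewest closed_states_reach[OF st C i j ij] by blast
    then have "card (reached j) = card (reached i)" using card_mono[OF fin sub] by simp
    then have "reached j = reached i" by (rule card_subset_eq[OF fin sub])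
    then show ?thesis using id reach_refl unfolding reached_def by auto
  qed
  then have "recurrent d Q i" unfolding recurrent_def using id by blast
  then show ?thesis using i by blast
qed

lemma recurrent_in_closed_states:
  assumes st: "stochastic d Q" and sc: "single_recurrent_class d Q"
    and C: "closed_states d Q C" "C \<noteq> {}" and v: "recurrent d Q v"
  shows "v \<in> C"
proof -
  obtain w where "w \<in> C" "recurrent d Q w" using closed_states_has_recurrent[OF st C] by blast
  then have "reach d Q w v" using sc v unfolding single_recurrent_class_def by blast
  moreover have "v \<in> {1..d}" using v unfolding recurrent_def by blast
  ultimately show ?thesis using closed_states_reach[OF st C(1) \<open>w \<in> C\<close>] by blast
qed

lemma closed_states_meet:
  assumes st: "stochastic d Q" and sc: "single_recurrent_class d Q"
    and "closed_states d Q C1" "C1 \<noteq> {}" and C2: "closed_states d Q C2" "C2 \<noteq> {}"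
  shows "C1 \<inter> C2 \<noteq> {}"
  using closed_states_has_recurrent[OF st C2] recurrent_in_closed_states[OF st sc assms(3,4)] by blast

lemma closed_states_cong:
  assumes "closed_states d Q C" "\<And>i j. i \<in> C \<Longrightarrow> Q i j = Q' i j"
  shows "closed_states d Q' C"
  using assms unfolding closed_states_def by auto

lemma mpow_cong_closed_states:
  assumes st: "stochastic d Q" and C: "closed_states d Q C"
    and agree: "\<And>i j. i \<in> C \<Longrightarrow> Q i j = Q' i j" and i: "i \<in> C" and "j \<in> {1..d}"
  shows "mpow d Q t i j = mpow d Q' t i j"
  using \<open>j \<in> {1..d}\<close>
proof (induction t arbitrary: j)
  case (Suc t)
  have "mpow d Q t i k * Q k j = mpow d Q' t i k * Q' k j" if k: "k \<in> {1..d}" for k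
  proof (cases "k \<in> C")
    case False
    then have "\<not> 0 < mpow d Q t i k" using closed_states_mpow[OF st C i k] by blast
    then have "mpow d Q t i k = 0" using mpow_nonneg[OF st k, of t i] by simp
    then show ?thesis using Suc.IH[OF k] by simp
  qed (use Suc.IH[OF k] agree in simp)
  then show ?case by simp
qed simp

lemma recurrent_eq_if_agree_on_closed_states:
  assumes st: "stochastic d Q" "stochastic d Q'"
    and sc: "single_recurrent_class d Q" "single_recurrent_class d Q'"
    and C: "closed_states d Q C" "closed_states d Q' C" "C \<noteq> {}"
    and agree: "\<And>i j. i \<in> C \<Longrightarrow> Q i j = Q' i j"
  shows "recurrent d Q = recurrent d Q'"
proof
  fix v
  have reach_eq: "reach d Q i j \<longleftrightarrow> reach d Q' i j" if "i \<in> C" "j \<in> {1..d}" for i j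
    using mpow_cong_closed_states[OF st(1) C(1) agree that] unfolding reach_def by simp
  show "recurrent d Q v \<longleftrightarrow> recurrent d Q' v"
  proof (cases "v \<in> C")
    case True
    then have vd: "v \<in> {1..d}" using C(1) unfolding closed_states_def by auto
    have "(reach d Q v j \<longrightarrow> reach d Q j v) \<longleftrightarrow> (reach d Q' v j \<longrightarrow> reach d Q' j v)"
      if j: "j \<in> {1..d}" for j
    proof (cases "reach d Q v j")
      case True
      then have "j \<in> C" using closed_states_reach[OF st(1) C(1) \<open>v \<in> C\<close> j] by blast
      then show ?thesis using reach_eq[OF \<open>v \<in> C\<close> j] reach_eq[OF _ vd] by simp
    qed (use reach_eq[OF \<open>v \<in> C\<close> j] in simp)
    then show ?thesis unfolding recurrent_def by simp
  next
    case False
    then show ?thesis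
      using recurrent_in_closed_states[OF st(1) sc(1) C(1) C(3), of v]
        recurrent_in_closed_states[OF st(2) sc(2) C(2) C(3), of v] by blast
  qed
qed

section \<open>The Poisson equation of a unichain\<close>

definition poisson_sol :: "nat \<Rightarrow> (nat \<Rightarrow> nat \<Rightarrow> real) \<Rightarrow> (nat \<Rightarrow> real) \<Rightarrow> real \<Rightarrow> (nat \<Rightarrow> real) \<Rightarrow> bool" where
  "poisson_sol d Q f g h \<longleftrightarrow> (\<forall>i\<in>{1..d}. g + h i = f i + mat_apply d Q h i)"

definition argmin_states :: "nat \<Rightarrow> (nat \<Rightarrow> real) \<Rightarrow> nat set" where
  "argmin_states d u = {i\<in>{1..d}. u i = Min (u ` {1..d})}"

lemma argmin_states_nonempty: "1 \<le> d \<Longrightarrow> argmin_states d u \<noteq> {}"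
proof -
  assume "1 \<le> d"
  then have "Min (u ` {1..d}) \<in> u ` {1..d}" by (intro Min_in) auto
  then show ?thesis unfolding argmin_states_def by force
qed

lemma argmin_states_le: "i \<in> argmin_states d u \<Longrightarrow> j \<in> {1..d} \<Longrightarrow> u i \<le> u j"
  unfolding argmin_states_def by auto

lemma mat_apply_cong: "(\<And>j. j \<in> {1..d} \<Longrightarrow> u j = v j) \<Longrightarrow> mat_apply d Q u i = mat_apply d Q v i"
  unfolding mat_apply_def by (rule sum.cong) auto

lemma mat_apply_uminus: "mat_apply d Q (\<lambda>j. - u j) i = - mat_apply d Q u i"
  by (simp add: mat_apply_def sum_negf)

lemma mat_apply_diff: "mat_apply d Q (\<lambda>j. u j - v j) i = mat_apply d Q u i - mat_apply d Q v i"
  by (simp add: mat_apply_def right_diff_distrib sum_subtractf)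

lemma mat_apply_add_scaled:
  "mat_apply d Q (\<lambda>j. u j + c * v j) i = mat_apply d Q u i + c * mat_apply d Q v i"
  by (simp add: mat_apply_def distrib_left sum.distrib sum_distrib_left mult.left_commute)

lemma mat_apply_const:
  assumes "stochastic d Q" "i \<in> {1..d}"
  shows "mat_apply d Q (\<lambda>_. c) i = c"
  using stochasticD(2)[OF assms] by (simp add: mat_apply_def sum_distrib_right[symmetric])

lemma mat_apply_shift:
  assumes "stochastic d Q" "i \<in> {1..d}" "\<And>j. j \<in> {1..d} \<Longrightarrow> u j = v j + c"
  shows "mat_apply d Q u i = mat_apply d Q v i + c"
proof -
  have "mat_apply d Q u i = mat_apply d Q (\<lambda>j. v j + c * 1) i"
    using assms(3) by (intro mat_apply_cong) simp
  then show ?thesis unfolding mat_apply_add_scaled mat_apply_const[OF assms(1,2)] by simp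
qed

lemma mat_apply_lower_bound:
  assumes "stochastic d Q" "i \<in> {1..d}" "\<And>j. j \<in> {1..d} \<Longrightarrow> c \<le> u j"
  shows "c \<le> mat_apply d Q u i"
proof -
  have "c = (\<Sum>j=1..d. Q i j * c)"
    using stochasticD(2)[OF assms(1,2)] by (simp add: sum_distrib_right[symmetric])
  also have "\<dots> \<le> mat_apply d Q u i" unfolding mat_apply_def
    by (rule sum_mono) (use assms(3) stochasticD(1)[OF assms(1,2)] in \<open>auto intro: mult_left_mono\<close>)
  finally show ?thesis .
qed

lemma min_principle_gain_nonneg:
  assumes st: "stochastic d Q" and "1 \<le> d"
    and super: "\<And>i. i \<in> {1..d} \<Longrightarrow> mat_apply d Q u i \<le> c + u i"
  shows "0 \<le> c"
proof -
  obtain i where i: "i \<in> argmin_states d u" using argmin_states_nonempty[OF \<open>1 \<le> d\<close>] by blast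
  then have id: "i \<in> {1..d}" unfolding argmin_states_def by auto
  have "u i \<le> mat_apply d Q u i"
    by (rule mat_apply_lower_bound[OF st id argmin_states_le[OF i]])
  then show ?thesis using super[OF id] by simp
qed

lemma argmin_states_closed:
  assumes st: "stochastic d Q" and super: "\<And>i. i \<in> {1..d} \<Longrightarrow> mat_apply d Q u i \<le> u i"
  shows "closed_states d Q (argmin_states d u)"
  unfolding closed_states_def
proof (intro conjI ballI impI)
  show "argmin_states d u \<subseteq> {1..d}" unfolding argmin_states_def by auto
  fix i j assume i: "i \<in> argmin_states d u" and j: "j \<in> {1..d}" and Qij: "0 < Q i j"
  have id: "i \<in> {1..d}" using i unfolding argmin_states_def by auto
  have nonneg: "0 \<le> Q i k * (u k - u i)" if "k \<in> {1..d}" for k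
    using argmin_states_le[OF i that] stochasticD(1)[OF st id that] by simp
  have "(\<Sum>k=1..d. Q i k * (u k - u i)) = mat_apply d Q u i - mat_apply d Q (\<lambda>_. u i) i"
    unfolding mat_apply_def by (simp add: right_diff_distrib sum_subtractf)
  also have "\<dots> \<le> 0" using super[OF id] mat_apply_const[OF st id] by simp
  finally have "(\<Sum>k=1..d. Q i k * (u k - u i)) = 0"
    using sum_nonneg[of "{1..d}" "\<lambda>k. Q i k * (u k - u i)", OF nonneg] by linarith
  then have "\<forall>k\<in>{1..d}. Q i k * (u k - u i) = 0"
    using sum_nonneg_eq_0_iff[of "{1..d}" "\<lambda>k. Q i k * (u k - u i)"] nonneg by simp
  then have "Q i j * (u j - u i) = 0" using j by blast
  then have "u j = u i" using Qij by simp
  then show "j \<in> argmin_states d u" using i j unfolding argmin_states_def by auto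
qed

lemma poisson_homogeneous:
  assumes st: "stochastic d Q" and sc: "single_recurrent_class d Q" and d: "1 \<le> d"
    and sol: "poisson_sol d Q (\<lambda>_. 0) c u"
  shows "c = 0" and "\<And>i j. i \<in> {1..d} \<Longrightarrow> j \<in> {1..d} \<Longrightarrow> u i = u j"
proof -
  have eq: "mat_apply d Q u i = c + u i" if "i \<in> {1..d}" for i
    using sol that unfolding poisson_sol_def by simp
  have eq': "mat_apply d Q (\<lambda>j. - u j) i = - c + - u i" if "i \<in> {1..d}" for i
    using eq[OF that] by (simp add: mat_apply_uminus)
  have "0 \<le> c" by (rule min_principle_gain_nonneg[OF st d]) (rule eq[THEN eq_refl])
  moreover have "0 \<le> - c" by (rule min_principle_gain_nonneg[OF st d]) (rule eq'[THEN eq_refl])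
  ultimately show c0: "c = 0" by simp
  have "closed_states d Q (argmin_states d u)"
    using argmin_states_closed[OF st, of u] eq c0 by simp
  moreover have "closed_states d Q (argmin_states d (\<lambda>j. - u j))"
    using argmin_states_closed[OF st, of "\<lambda>j. - u j"] eq' c0 by simp
  ultimately have "argmin_states d u \<inter> argmin_states d (\<lambda>j. - u j) \<noteq> {}"
    using closed_states_meet[OF st sc] argmin_states_nonempty[OF d] by simp
  then obtain w where w: "w \<in> argmin_states d u" "w \<in> argmin_states d (\<lambda>j. - u j)" by blast
  have uw: "u j = u w" if "j \<in> {1..d}" for j
    using argmin_states_le[OF w(1) that] argmin_states_le[OF w(2) that] by simp
  fix i j assume "i \<in> {1..d}" "j \<in> {1..d}"
  then show "u i = u j" using uw by simp
qed

lemma poisson_sol_unique: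
  assumes st: "stochastic d Q" and sc: "single_recurrent_class d Q" and d: "1 \<le> d"
    and sol: "poisson_sol d Q f g h" and sol': "poisson_sol d Q f g' h'"
  shows "g' = g" and "\<exists>c. \<forall>j\<in>{1..d}. h' j = h j + c"
proof -
  have "(g' - g) + (h' i - h i) = 0 + mat_apply d Q (\<lambda>j. h' j - h j) i" if "i \<in> {1..d}" for i
  proof -
    have "g + h i = f i + mat_apply d Q h i" "g' + h' i = f i + mat_apply d Q h' i"
      using sol sol' that unfolding poisson_sol_def by auto
    then show ?thesis unfolding mat_apply_diff by simp
  qed
  then have hom: "poisson_sol d Q (\<lambda>_. 0) (g' - g) (\<lambda>j. h' j - h j)"
    unfolding poisson_sol_def by blast
  show "g' = g" using poisson_homogeneous(1)[OF st sc d hom] by simp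
  have "h' j = h j + (h' 1 - h 1)" if "j \<in> {1..d}" for j
    using poisson_homogeneous(2)[OF st sc d hom that, of 1] d by simp
  then show "\<exists>c. \<forall>j\<in>{1..d}. h' j = h j + c" by blast
qed

lemma poisson_sol_add_scaled:
  assumes "poisson_sol d Q f g h" "poisson_sol d Q f' g' h'"
  shows "poisson_sol d Q (\<lambda>i. f i + c * f' i) (g + c * g') (\<lambda>j. h j + c * h' j)"
  unfolding poisson_sol_def mat_apply_add_scaled
proof
  fix i assume "i \<in> {1..d}"
  then have "g + h i = f i + mat_apply d Q h i" "g' + h' i = f' i + mat_apply d Q h' i"
    using assms unfolding poisson_sol_def by auto
  then show "g + c * g' + (h i + c * h' i) = f i + c * f' i + (mat_apply d Q h i + c * mat_apply d Q h' i)"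
    by (metis distrib_left add.assoc add.left_commute)
qed

lemma square_system_solvable_if_injective:
  fixes M :: "nat \<Rightarrow> nat \<Rightarrow> real" and b :: "nat \<Rightarrow> real"
  assumes inj: "\<And>x. \<forall>i\<in>{1..d}. (\<Sum>j=1..d. M i j * x j) = 0 \<Longrightarrow> \<forall>j\<in>{1..d}. x j = 0"
  shows "\<exists>x. \<forall>i\<in>{1..d}. (\<Sum>j=1..d. M i j * x j) = b i"
proof -
  define A where "A = mat d d (\<lambda>(i,j). M (Suc i) (Suc j))"
  have A: "A \<in> carrier_mat d d" by (simp add: A_def)
  define xv where "xv v j = (if 1 \<le> j then v $ (j - 1) else 0)" for v :: "real vec" and j
  have conv: "(A *\<^sub>v v) $ (i - 1) = (\<Sum>j=1..d. M i j * xv v j)"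
    if v: "v \<in> carrier_vec d" and i: "i \<in> {1..d}" for v i
  proof -
    have "(A *\<^sub>v v) $ (i - 1) = row A (i - 1) \<bullet> v" using i A by (subst index_mult_mat_vec) auto
    also have "\<dots> = (\<Sum>j<d. M i (Suc j) * v $ j)"
      using i v unfolding scalar_prod_def A_def by (auto simp: atLeast0LessThan intro!: sum.cong)
    also have "\<dots> = (\<Sum>j=1..d. M i j * xv v j)"
      by (simp add: sum.atLeast1_atMost_eq xv_def)
    finally show ?thesis .
  qed
  have "det A \<noteq> 0"
  proof
    assume "det A = 0"
    then obtain v where v: "v \<in> carrier_vec d" "v \<noteq> 0\<^sub>v d" "A *\<^sub>v v = 0\<^sub>v d"
      using det_0_iff_vec_prod_zero_field[OF A] by auto
    have "(\<Sum>j=1..d. M i j * xv v j) = 0" if i: "i \<in> {1..d}" for i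
      using conv[OF v(1) i] v(3) i by auto
    then have z: "\<forall>j\<in>{1..d}. xv v j = 0" using inj by blast
    have "v $ k = 0" if "k < d" for k
      using z[rule_format, of "Suc k"] that by (simp add: xv_def)
    then have "v = 0\<^sub>v d" using v(1) by (intro eq_vecI) auto
    then show False using v(2) by simp
  qed
  from det_non_zero_imp_unit[OF A this, of "()"]
  obtain B where B: "B \<in> carrier_mat d d" and AB: "A * B = 1\<^sub>m d"
    unfolding Units_def ring_mat_def by auto
  define y where "y = B *\<^sub>v vec d (\<lambda>i. b (Suc i))"
  have y: "y \<in> carrier_vec d" using B by (simp add: y_def)
  have Ay: "A *\<^sub>v y = vec d (\<lambda>i. b (Suc i))"
    using A B AB by (simp add: y_def assoc_mult_mat_vec[symmetric])
  have "(\<Sum>j=1..d. M i j * xv y j) = b i" if i: "i \<in> {1..d}" for i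
    using conv[OF y i] Ay i by auto
  then show ?thesis by blast
qed

text \<open>Pinning the bias by h z = 0 leaves a square system in (g, h), whose homogeneous version has
  only the trivial solution.\<close>

lemma poisson_sol_exists:
  assumes st: "stochastic d Q" and sc: "single_recurrent_class d Q" and z: "z \<in> {1..d}"
  shows "\<exists>g h. h z = 0 \<and> poisson_sol d Q f g h"
proof -
  have d: "1 \<le> d" using z by auto
  define M where "M i j = (if j = z then 1 else (if i = j then 1 else 0) - Q i j)" for i j
  define hz where "hz x j = (if j = z then 0 else x j)" for x :: "nat \<Rightarrow> real" and j
  have M: "(\<Sum>j=1..d. M i j * x j) = x z + hz x i - mat_apply d Q (hz x) i"
    if i: "i \<in> {1..d}" for x i
  proof -
    have "(\<Sum>j=1..d. M i j * x j) = (\<Sum>j=1..d. (if j = z then x z else 0)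
          + ((if i = j then hz x j else 0) - Q i j * hz x j))"
      by (rule sum.cong) (auto simp: M_def hz_def algebra_simps)
    also have "\<dots> = x z + hz x i - mat_apply d Q (hz x) i"
      using z i by (simp add: sum.distrib sum_subtractf mat_apply_def)
    finally show ?thesis .
  qed
  have "\<exists>x. \<forall>i\<in>{1..d}. (\<Sum>j=1..d. M i j * x j) = f i"
  proof (rule square_system_solvable_if_injective)
    fix x assume "\<forall>i\<in>{1..d}. (\<Sum>j=1..d. M i j * x j) = 0"
    then have hom: "poisson_sol d Q (\<lambda>_. 0) (x z) (hz x)"
      unfolding poisson_sol_def using M by auto
    have xz: "x z = 0" using poisson_homogeneous(1)[OF st sc d hom] .
    have "hz x j = 0" if "j \<in> {1..d}" for j
      using poisson_homogeneous(2)[OF st sc d hom that z] by (simp add: hz_def)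
    then show "\<forall>j\<in>{1..d}. x j = 0" using xz unfolding hz_def by (metis (full_types))
  qed
  then obtain x where "\<forall>i\<in>{1..d}. (\<Sum>j=1..d. M i j * x j) = f i" by blast
  then have "poisson_sol d Q f (x z) (hz x)" unfolding poisson_sol_def using M by auto
  then show ?thesis by (intro exI[of _ "x z"] exI[of _ "hz x"]) (simp add: hz_def)
qed

lemma mpow_expectation_abs_le:
  assumes st: "stochastic d Q" and i0: "i0 \<in> {1..d}"
  shows "\<bar>\<Sum>j=1..d. mpow d Q t i0 j * h j\<bar> \<le> (\<Sum>j=1..d. \<bar>h j\<bar>)"
proof -
  have "\<bar>\<Sum>j=1..d. mpow d Q t i0 j * h j\<bar> \<le> (\<Sum>j=1..d. \<bar>mpow d Q t i0 j * h j\<bar>)" by (rule sum_abs)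
  also have "\<dots> \<le> (\<Sum>j=1..d. \<bar>h j\<bar>)"
  proof (rule sum_mono)
    fix j assume j: "j \<in> {1..d}"
    have "0 \<le> mpow d Q t i0 j" "mpow d Q t i0 j \<le> 1"
      using mpow_nonneg[OF st j] mpow_le_one[OF st i0 j] by auto
    then show "\<bar>mpow d Q t i0 j * h j\<bar> \<le> \<bar>h j\<bar>" by (simp add: abs_mult mult_left_le_one_le)
  qed
  finally show ?thesis .
qed

lemma poisson_sol_mpow_expectation:
  assumes st: "stochastic d Q" and i0: "i0 \<in> {1..d}" and sol: "poisson_sol d Q f g h"
  shows "(\<Sum>j=1..d. mpow d Q t i0 j * f j)
    = g - ((\<Sum>j=1..d. mpow d Q (Suc t) i0 j * h j) - (\<Sum>j=1..d. mpow d Q t i0 j * h j))"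
proof -
  have "(\<Sum>j=1..d. mpow d Q t i0 j * f j)
      = (\<Sum>j=1..d. mpow d Q t i0 j * g + mpow d Q t i0 j * h j - mpow d Q t i0 j * mat_apply d Q h j)"
  proof (rule sum.cong)
    fix j assume "j \<in> {1..d}"
    then have fj: "f j = g + h j - mat_apply d Q h j" using sol unfolding poisson_sol_def by force
    show "mpow d Q t i0 j * f j
        = mpow d Q t i0 j * g + mpow d Q t i0 j * h j - mpow d Q t i0 j * mat_apply d Q h j"
      unfolding fj by (simp add: algebra_simps)
  qed simp
  also have "\<dots> = (\<Sum>j=1..d. mpow d Q t i0 j) * g + (\<Sum>j=1..d. mpow d Q t i0 j * h j)
      - (\<Sum>j=1..d. mpow d Q t i0 j * mat_apply d Q h j)"
    by (simp only: sum.distrib sum_subtractf sum_distrib_right)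
  also have "(\<Sum>j=1..d. mpow d Q t i0 j * mat_apply d Q h j) = (\<Sum>j=1..d. mpow d Q (Suc t) i0 j * h j)"
    unfolding mat_apply_def
    by (simp add: sum_distrib_left sum_distrib_right mult.assoc) (rule sum.swap)
  finally show ?thesis using mpow_row_sum[OF st i0] by simp
qed

lemma longrun_avg_eq_gain:
  assumes st: "stochastic d Q" and i0: "i0 \<in> {1..d}" and sol: "poisson_sol d Q f g h"
  shows "longrun_avg d Q f i0 = g"
proof -
  define E where "E t = (\<Sum>j=1..d. mpow d Q t i0 j * h j)" for t
  define B where "B = (\<Sum>j=1..d. \<bar>h j\<bar>)"
  define avg where "avg T = (\<Sum>t<T. \<Sum>j=1..d. mpow d Q t i0 j * f j) / real T" for T
  have avg: "\<bar>avg T - g\<bar> \<le> 2 * B / real T" if T: "T \<ge> 1" for T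
  proof -
    have "(\<Sum>t<T. \<Sum>j=1..d. mpow d Q t i0 j * f j) = (\<Sum>t<T. g - (E (Suc t) - E t))"
      unfolding E_def poisson_sol_mpow_expectation[OF st i0 sol] ..
    also have "\<dots> = real T * g - (\<Sum>t<T. E (Suc t) - E t)" by (subst sum_subtractf) simp
    also have "\<dots> = real T * g - (E T - E 0)" by (simp only: sum_lessThan_telescope)
    finally have "avg T - g = - (E T - E 0) / real T" using T by (simp add: avg_def field_simps)
    moreover have "\<bar>E T - E 0\<bar> \<le> 2 * B"
      using mpow_expectation_abs_le[OF st i0, of T h] mpow_expectation_abs_le[OF st i0, of 0 h]
      unfolding E_def B_def by linarith
    ultimately show ?thesis by (simp add: abs_divide divide_right_mono)
  qed
  have "avg \<longlonglongrightarrow> g"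
  proof (rule tendsto_sandwich)
    show "\<forall>\<^sub>F T in sequentially. g - 2 * B / real T \<le> avg T"
      and "\<forall>\<^sub>F T in sequentially. avg T \<le> g + 2 * B / real T"
      using avg unfolding eventually_sequentially abs_le_iff by (auto simp: algebra_simps)
    show "(\<lambda>T. g - 2 * B / real T) \<longlonglongrightarrow> g" "(\<lambda>T. g + 2 * B / real T) \<longlonglongrightarrow> g"
      using tendsto_diff[OF tendsto_const lim_const_over_n[of "2 * B"]]
        tendsto_add[OF tendsto_const lim_const_over_n[of "2 * B"]] by simp_all
  qed
  then show ?thesis unfolding longrun_avg_def avg_def[symmetric] by (rule limI)
qed

lemma gain_eq_stationary_average:
  assumes total: "(\<Sum>i=1..d. m i) = 1"
    and stationary: "\<And>j. j \<in> {1..d} \<Longrightarrow> (\<Sum>i=1..d. m i * Q i j) = m j"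
    and sol: "poisson_sol d Q f g h"
  shows "g = (\<Sum>i=1..d. m i * f i)"
proof -
  have "g + (\<Sum>i=1..d. m i * h i) = (\<Sum>i=1..d. m i * (g + h i))"
    using total by (simp add: distrib_left sum.distrib sum_distrib_right[symmetric])
  also have "\<dots> = (\<Sum>i=1..d. m i * f i) + (\<Sum>i=1..d. m i * mat_apply d Q h i)"
    using sol unfolding poisson_sol_def by (simp add: distrib_left sum.distrib)
  also have "(\<Sum>i=1..d. m i * mat_apply d Q h i) = (\<Sum>j=1..d. (\<Sum>i=1..d. m i * Q i j) * h j)"
    unfolding mat_apply_def by (simp add: sum_distrib_left sum_distrib_right mult.assoc) (rule sum.swap)
  also have "\<dots> = (\<Sum>j=1..d. m j * h j)" using stationary by simp
  finally show ?thesis by simp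
qed

lemma longrun_avg_stationary:
  assumes st: "stochastic d Q" and sc: "single_recurrent_class d Q" and i0: "i0 \<in> {1..d}"
    and total: "(\<Sum>i=1..d. m i) = 1"
    and stationary: "\<And>j. j \<in> {1..d} \<Longrightarrow> (\<Sum>i=1..d. m i * Q i j) = m j"
  shows "longrun_avg d Q f i0 = (\<Sum>i=1..d. m i * f i)"
proof -
  obtain g h where "poisson_sol d Q f g h" using poisson_sol_exists[OF st sc i0] by blast
  then show ?thesis
    using longrun_avg_eq_gain[OF st i0] gain_eq_stationary_average[OF total stationary] by simp
qed

section \<open>Average-reward MDPs with two actions\<close>

lemma stochastic_pol_matrix:
  assumes "stochastic d P0" "stochastic d P1" "policy d pol"
  shows "stochastic d (pol_matrix P0 P1 pol)"
  unfolding stochastic_def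
proof (intro conjI ballI)
  fix i j assume i: "i \<in> {1..d}" and j: "j \<in> {1..d}"
  have "0 \<le> pol i" "pol i \<le> 1" using assms(3) i unfolding policy_def by auto
  then show "0 \<le> pol_matrix P0 P1 pol i j"
    using stochasticD(1)[OF assms(1) i j] stochasticD(1)[OF assms(2) i j]
    unfolding pol_matrix_def by simp
next
  fix i assume i: "i \<in> {1..d}"
  have "(\<Sum>j=1..d. pol_matrix P0 P1 pol i j) = (1 - pol i) * (\<Sum>j=1..d. P0 i j) + pol i * (\<Sum>j=1..d. P1 i j)"
    unfolding pol_matrix_def by (simp add: sum.distrib sum_distrib_left)
  then show "(\<Sum>j=1..d. pol_matrix P0 P1 pol i j) = 1"
    using stochasticD(2)[OF assms(1) i] stochasticD(2)[OF assms(2) i] by simp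
qed

lemma mat_apply_pol_matrix:
  "mat_apply d (pol_matrix P0 P1 pol) h i = (1 - pol i) * mat_apply d P0 h i + pol i * mat_apply d P1 h i"
  unfolding mat_apply_def pol_matrix_def
  by (simp add: distrib_right sum.distrib sum_distrib_left mult.assoc)

lemma pol_reward_plus_mat_apply:
  "pol_reward A0 A1 pol i + mat_apply d (pol_matrix P0 P1 pol) h i
     = (1 - pol i) * (A0 i + mat_apply d P0 h i) + pol i * (A1 i + mat_apply d P1 h i)"
  unfolding mat_apply_pol_matrix pol_reward_def by (simp add: algebra_simps)

definition det_policies :: "nat \<Rightarrow> (nat \<Rightarrow> real) set" where
  "det_policies d = {\<sigma>. (\<forall>i. \<sigma> i = 0 \<or> \<sigma> i = 1) \<and> (\<forall>i. i \<notin> {1..d} \<longrightarrow> \<sigma> i = 0)}"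

lemma finite_det_policies: "finite (det_policies d)"
proof (rule finite_subset)
  show "det_policies d \<subseteq> (\<lambda>S i. if i \<in> S then 1 else 0) ` Pow {1..d}"
  proof
    fix \<sigma> assume \<sigma>: "\<sigma> \<in> det_policies d"
    then have "\<sigma> = (\<lambda>i. if i \<in> {i. \<sigma> i = 1} then 1 else 0)" and "{i. \<sigma> i = 1} \<subseteq> {1..d}"
      unfolding det_policies_def by force+
    then show "\<sigma> \<in> (\<lambda>S i. if i \<in> S then 1 else 0) ` Pow {1..d}" by blast
  qed
qed simp

lemma det_policies_01: "\<sigma> \<in> det_policies d \<Longrightarrow> \<sigma> i = 0 \<or> \<sigma> i = 1"
  unfolding det_policies_def by blast

lemma policy_if_det_policies: "\<sigma> \<in> det_policies d \<Longrightarrow> policy d \<sigma>"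
  unfolding policy_def
proof
  fix i assume "\<sigma> \<in> det_policies d"
  then have "\<sigma> i = 0 \<or> \<sigma> i = 1" by (rule det_policies_01)
  then show "0 \<le> \<sigma> i \<and> \<sigma> i \<le> 1" by auto
qed

lemma pol_reward_plus_mat_apply_det:
  assumes "\<sigma> i = 0 \<or> \<sigma> i = 1"
  shows "pol_reward A0 A1 \<sigma> i + mat_apply d (pol_matrix P0 P1 \<sigma>) h i
     = (if \<sigma> i = 1 then A1 i + mat_apply d P1 h i else A0 i + mat_apply d P0 h i)"
  using assms unfolding pol_reward_plus_mat_apply by auto

lemma lex_max_finite:
  fixes f :: "'a \<Rightarrow> 'b::linorder" and g :: "'a \<Rightarrow> 'c::linorder"
  assumes "finite D" "D \<noteq> {}"
  obtains x where "x \<in> D" "\<And>y. y \<in> D \<Longrightarrow> f y \<le> f x" "\<And>y. y \<in> D \<Longrightarrow> f y = f x \<Longrightarrow> g y \<le> g x"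
proof -
  define D1 where "D1 = {x\<in>D. f x = Max (f ` D)}"
  have "Max (f ` D) \<in> f ` D" using assms by simp
  then have "D1 \<noteq> {}" "finite D1" unfolding D1_def using assms(1) by auto
  then have "Max (g ` D1) \<in> g ` D1" by simp
  then obtain x where x: "x \<in> D1" "g x = Max (g ` D1)" by auto
  show ?thesis
  proof
    show "x \<in> D" using x unfolding D1_def by simp
    show "f y \<le> f x" if "y \<in> D" for y using x that assms(1) unfolding D1_def by simp
    show "g y \<le> g x" if "y \<in> D" "f y = f x" for y
      using x that \<open>finite D1\<close> unfolding D1_def by simp
  qed
qed

locale unichain_mdp =
  fixes d :: nat and P0 P1 :: "nat \<Rightarrow> nat \<Rightarrow> real"
  assumes stochastic_P0: "stochastic d P0" and stochastic_P1: "stochastic d P1"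
    and unichain: "unichain d P0 P1" and nonempty_states: "1 \<le> d"
begin

abbreviation Qpol :: "(nat \<Rightarrow> real) \<Rightarrow> nat \<Rightarrow> nat \<Rightarrow> real" where
  "Qpol pol \<equiv> pol_matrix P0 P1 pol"

lemma stochastic_Qpol: "policy d pol \<Longrightarrow> stochastic d (Qpol pol)"
  using stochastic_pol_matrix[OF stochastic_P0 stochastic_P1] .

lemma single_recurrent_class_Qpol: "policy d pol \<Longrightarrow> single_recurrent_class d (Qpol pol)"
  using unichain unfolding unichain_def by blast

lemma Qpol_has_recurrent: "policy d pol \<Longrightarrow> \<exists>i. recurrent d (Qpol pol) i"
  using closed_states_has_recurrent[OF stochastic_Qpol, of pol "{1..d}"] nonempty_states
  unfolding closed_states_def by auto

text \<open>The minimisers of u are closed under p and its maximisers under q, so both sets are closed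
  for the policy that follows q on the maximisers and p elsewhere; in a unichain they must meet.\<close>

lemma const_if_superharmonic_subharmonic:
  assumes pol: "policy d p" "policy d q"
    and super: "\<And>i. i \<in> {1..d} \<Longrightarrow> mat_apply d (Qpol p) u i \<le> u i"
    and sub: "\<And>i. i \<in> {1..d} \<Longrightarrow> u i \<le> mat_apply d (Qpol q) u i"
  shows "\<exists>c. \<forall>i\<in>{1..d}. u i = c"
proof -
  define Sa where "Sa = argmin_states d u"
  define Sb where "Sb = argmin_states d (\<lambda>j. - u j)"
  have Sa: "closed_states d (Qpol p) Sa" "Sa \<noteq> {}"
    unfolding Sa_def using argmin_states_closed[OF stochastic_Qpol[OF pol(1)] super]
      argmin_states_nonempty[OF nonempty_states] by auto
  have Sb: "closed_states d (Qpol q) Sb" "Sb \<noteq> {}"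
    unfolding Sb_def using argmin_states_closed[OF stochastic_Qpol[OF pol(2)], of "\<lambda>j. - u j"] sub
      argmin_states_nonempty[OF nonempty_states] by (auto simp: mat_apply_uminus)
  have "Sa \<inter> Sb \<noteq> {}"
  proof
    assume disj: "Sa \<inter> Sb = {}"
    define r where "r i = (if i \<in> Sb then q i else p i)" for i
    have r: "policy d r" using pol unfolding policy_def r_def by auto
    have "closed_states d (Qpol r) Sa"
    proof (rule closed_states_cong[OF Sa(1)])
      fix i j assume "i \<in> Sa"
      then have "i \<notin> Sb" using disj by blast
      then show "Qpol p i j = Qpol r i j" unfolding pol_matrix_def r_def by simp
    qed
    moreover have "closed_states d (Qpol r) Sb"
      by (rule closed_states_cong[OF Sb(1)]) (simp add: pol_matrix_def r_def)
    ultimately have "Sa \<inter> Sb \<noteq> {}"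
      using closed_states_meet[OF stochastic_Qpol[OF r] single_recurrent_class_Qpol[OF r]] Sa(2) Sb(2)
      by simp
    then show False using disj by simp
  qed
  then obtain w where w: "w \<in> argmin_states d u" "w \<in> argmin_states d (\<lambda>j. - u j)"
    unfolding Sa_def Sb_def by blast
  have "u i = u w" if "i \<in> {1..d}" for i
    using argmin_states_le[OF w(1) that] argmin_states_le[OF w(2) that] by simp
  then show ?thesis by blast
qed

definition bellman :: "(nat \<Rightarrow> real) \<Rightarrow> (nat \<Rightarrow> real) \<Rightarrow> real \<Rightarrow> (nat \<Rightarrow> real) \<Rightarrow> bool" where
  "bellman A0 A1 g h \<longleftrightarrow>
     (\<forall>i\<in>{1..d}. g + h i = max (A0 i + mat_apply d P0 h i) (A1 i + mat_apply d P1 h i))"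

lemma bellman_policy_le:
  assumes "bellman A0 A1 g h" "policy d pol" "i \<in> {1..d}"
  shows "pol_reward A0 A1 pol i + mat_apply d (Qpol pol) h i \<le> g + h i"
proof -
  have p: "0 \<le> pol i" "pol i \<le> 1" using assms(2,3) unfolding policy_def by auto
  have "A0 i + mat_apply d P0 h i \<le> g + h i" "A1 i + mat_apply d P1 h i \<le> g + h i"
    using assms(1,3) unfolding bellman_def by auto
  then have "(1 - pol i) * (A0 i + mat_apply d P0 h i) \<le> (1 - pol i) * (g + h i)"
    and "pol i * (A1 i + mat_apply d P1 h i) \<le> pol i * (g + h i)"
    using p by (simp_all add: mult_left_mono)
  then show ?thesis unfolding pol_reward_plus_mat_apply by (simp add: algebra_simps)
qed

definition greedy :: "(nat \<Rightarrow> real) \<Rightarrow> (nat \<Rightarrow> real) \<Rightarrow> (nat \<Rightarrow> real) \<Rightarrow> nat \<Rightarrow> real" where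
  "greedy A0 A1 h i = (if i \<in> {1..d} \<and> A0 i + mat_apply d P0 h i \<le> A1 i + mat_apply d P1 h i then 1 else 0)"

lemma greedy_det_policies: "greedy A0 A1 h \<in> det_policies d"
  unfolding det_policies_def greedy_def by auto

lemma poisson_sol_greedy:
  assumes "bellman A0 A1 g h"
  shows "poisson_sol d (Qpol (greedy A0 A1 h)) (pol_reward A0 A1 (greedy A0 A1 h)) g h"
  unfolding poisson_sol_def
proof
  fix i assume i: "i \<in> {1..d}"
  define \<sigma> where "\<sigma> = greedy A0 A1 h"
  have "\<sigma> i = 0 \<or> \<sigma> i = 1" unfolding \<sigma>_def greedy_def by auto
  from pol_reward_plus_mat_apply_det[where \<sigma>=\<sigma> and i=i, OF this]
  have "pol_reward A0 A1 \<sigma> i + mat_apply d (Qpol \<sigma>) h i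
      = max (A0 i + mat_apply d P0 h i) (A1 i + mat_apply d P1 h i)"
    using i unfolding \<sigma>_def greedy_def by (simp add: max_def)
  then show "g + h i = pol_reward A0 A1 \<sigma> i + mat_apply d (Qpol \<sigma>) h i"
    using assms i unfolding bellman_def by simp
qed

lemma bellman_unique:
  assumes b1: "bellman A0 A1 g1 h1" and b2: "bellman A0 A1 g2 h2"
  shows "g1 = g2" and "\<exists>c. \<forall>i\<in>{1..d}. h1 i = h2 i + c"
proof -
  define p1 where "p1 = greedy A0 A1 h1"
  define p2 where "p2 = greedy A0 A1 h2"
  have pol: "policy d p1" "policy d p2"
    unfolding p1_def p2_def by (simp_all add: greedy_det_policies policy_if_det_policies)
  have e1: "g1 + h1 i = pol_reward A0 A1 p1 i + mat_apply d (Qpol p1) h1 i"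
    and e2: "g2 + h2 i = pol_reward A0 A1 p2 i + mat_apply d (Qpol p2) h2 i" if "i \<in> {1..d}" for i
    using poisson_sol_greedy[OF b1] poisson_sol_greedy[OF b2] that
    unfolding p1_def p2_def poisson_sol_def by auto
  have super: "mat_apply d (Qpol p2) (\<lambda>j. h1 j - h2 j) i \<le> (g1 - g2) + (h1 i - h2 i)"
    if i: "i \<in> {1..d}" for i
    using bellman_policy_le[OF b1 pol(2) i] e2[OF i] unfolding mat_apply_diff by linarith
  have sub: "(h1 i - h2 i) + (g1 - g2) \<le> mat_apply d (Qpol p1) (\<lambda>j. h1 j - h2 j) i"
    if i: "i \<in> {1..d}" for i
    using bellman_policy_le[OF b2 pol(1) i] e1[OF i] unfolding mat_apply_diff by linarith
  have "0 \<le> g1 - g2"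
    by (rule min_principle_gain_nonneg[OF stochastic_Qpol[OF pol(2)] nonempty_states]) (rule super)
  moreover have "0 \<le> g2 - g1"
  proof (rule min_principle_gain_nonneg[OF stochastic_Qpol[OF pol(1)] nonempty_states])
    fix i assume "i \<in> {1..d}"
    then have "h1 i - h2 i + (g1 - g2) \<le> mat_apply d (Qpol p1) (\<lambda>j. h1 j - h2 j) i" by (rule sub)
    then show "mat_apply d (Qpol p1) (\<lambda>j. - (h1 j - h2 j)) i \<le> (g2 - g1) + - (h1 i - h2 i)"
      unfolding mat_apply_uminus by linarith
  qed
  ultimately show g: "g1 = g2" by simp
  have super0: "mat_apply d (Qpol p2) (\<lambda>j. h1 j - h2 j) i \<le> h1 i - h2 i" if "i \<in> {1..d}" for i
    using super[OF that] g by simp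
  have sub0: "h1 i - h2 i \<le> mat_apply d (Qpol p1) (\<lambda>j. h1 j - h2 j) i" if "i \<in> {1..d}" for i
    using sub[OF that] g by simp
  obtain c where c: "\<forall>i\<in>{1..d}. h1 i - h2 i = c"
    using const_if_superharmonic_subharmonic[OF pol(2) pol(1) super0 sub0] by blast
  have "h1 i = h2 i + c" if "i \<in> {1..d}" for i using c[rule_format, OF that] by linarith
  then show "\<exists>c. \<forall>i\<in>{1..d}. h1 i = h2 i + c" by blast
qed

lemma bellman_shift:
  assumes "bellman A0 A1 g h" and shift: "\<And>j. j \<in> {1..d} \<Longrightarrow> h' j = h j + c"
  shows "bellman A0 A1 g h'"
  unfolding bellman_def
proof
  fix i assume i: "i \<in> {1..d}"
  have "mat_apply d P0 h' i = mat_apply d P0 h i + c" "mat_apply d P1 h' i = mat_apply d P1 h i + c"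
    using mat_apply_shift[OF stochastic_P0 i shift] mat_apply_shift[OF stochastic_P1 i shift] by auto
  moreover have "g + h i = max (A0 i + mat_apply d P0 h i) (A1 i + mat_apply d P1 h i)"
    using assms(1) i unfolding bellman_def by blast
  ultimately show "g + h' i = max (A0 i + mat_apply d P0 h' i) (A1 i + mat_apply d P1 h' i)"
    using shift[OF i] by (simp add: max_def)
qed

lemma policy_improvement:
  assumes pol: "policy d \<pi>" "policy d \<pi>'"
    and eval': "poisson_sol d (Qpol \<pi>') (pol_reward A0 A1 \<pi>') g' h'"
    and improving: "\<And>i. i \<in> {1..d} \<Longrightarrow> g + h i \<le> pol_reward A0 A1 \<pi>' i + mat_apply d (Qpol \<pi>') h i"
    and unchanged: "\<And>i. i \<in> {1..d} \<Longrightarrow>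
       pol_reward A0 A1 \<pi>' i + mat_apply d (Qpol \<pi>') h i = g + h i \<Longrightarrow> \<pi>' i = \<pi> i"
    and no_gain: "g' \<le> g"
  shows "g' = g"
    and "recurrent d (Qpol \<pi>') = recurrent d (Qpol \<pi>)"
    and "\<And>z i. recurrent d (Qpol \<pi>) z \<Longrightarrow> i \<in> {1..d} \<Longrightarrow> h' z - h z \<le> h' i - h i"
    and "\<And>z i. recurrent d (Qpol \<pi>) z \<Longrightarrow> i \<in> {1..d} \<Longrightarrow>
       g + h i < pol_reward A0 A1 \<pi>' i + mat_apply d (Qpol \<pi>') h i \<Longrightarrow> h' z - h z < h' i - h i"
proof -
  define \<Delta> where "\<Delta> i = pol_reward A0 A1 \<pi>' i + mat_apply d (Qpol \<pi>') h i - (g + h i)" for i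
  define u where "u i = h' i - h i" for i
  have key: "(g' - g) + u i = \<Delta> i + mat_apply d (Qpol \<pi>') u i" if i: "i \<in> {1..d}" for i
  proof -
    have "g' + h' i = pol_reward A0 A1 \<pi>' i + mat_apply d (Qpol \<pi>') h' i"
      using eval' i unfolding poisson_sol_def by blast
    then show ?thesis unfolding u_def \<Delta>_def mat_apply_diff by linarith
  qed
  have st': "stochastic d (Qpol \<pi>')" using stochastic_Qpol[OF pol(2)] .
  have super: "mat_apply d (Qpol \<pi>') u i \<le> (g' - g) + u i" if "i \<in> {1..d}" for i
    using key[OF that] improving[OF that] unfolding \<Delta>_def by linarith
  have "0 \<le> g' - g" by (rule min_principle_gain_nonneg[OF st' nonempty_states super])
  then show g': "g' = g" using no_gain by simp
  have super0: "mat_apply d (Qpol \<pi>') u i \<le> u i" if "i \<in> {1..d}" for i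
    using super[OF that] g' by simp
  define S where "S = argmin_states d u"
  have S: "closed_states d (Qpol \<pi>') S" "S \<noteq> {}"
    unfolding S_def using argmin_states_closed[OF st' super0] argmin_states_nonempty[OF nonempty_states]
    by auto
  have S_le: "u i \<le> u j" if "i \<in> S" "j \<in> {1..d}" for i j
    using argmin_states_le that unfolding S_def by blast
  have S_sub: "i \<in> {1..d}" if "i \<in> S" for i using that unfolding S_def argmin_states_def by blast
  have agree: "Qpol \<pi>' i j = Qpol \<pi> i j" if "i \<in> S" for i j
  proof -
    have "u i \<le> mat_apply d (Qpol \<pi>') u i"
      by (rule mat_apply_lower_bound[OF st' S_sub[OF that] S_le[OF that]])
    then have "\<Delta> i = 0"
      using key[OF S_sub[OF that]] improving[OF S_sub[OF that]] g' unfolding \<Delta>_def by linarith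
    then have "\<pi>' i = \<pi> i" using unchanged[OF S_sub[OF that]] unfolding \<Delta>_def by simp
    then show ?thesis unfolding pol_matrix_def by simp
  qed
  have S_\<pi>: "closed_states d (Qpol \<pi>) S" by (rule closed_states_cong[OF S(1) agree])
  show "recurrent d (Qpol \<pi>') = recurrent d (Qpol \<pi>)"
    by (rule recurrent_eq_if_agree_on_closed_states[OF st' stochastic_Qpol[OF pol(1)]
          single_recurrent_class_Qpol[OF pol(2)] single_recurrent_class_Qpol[OF pol(1)] S(1) S_\<pi> S(2) agree])
  fix z i assume z: "recurrent d (Qpol \<pi>) z" and i: "i \<in> {1..d}"
  have "z \<in> S"
    by (rule recurrent_in_closed_states[OF stochastic_Qpol[OF pol(1)] single_recurrent_class_Qpol[OF pol(1)]
          S_\<pi> S(2) z])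
  then have uz: "u z \<le> u j" if "j \<in> {1..d}" for j using S_le that by blast
  then show "h' z - h z \<le> h' i - h i" using i unfolding u_def by blast
  assume "g + h i < pol_reward A0 A1 \<pi>' i + mat_apply d (Qpol \<pi>') h i"
  moreover have "u z \<le> mat_apply d (Qpol \<pi>') u i" by (rule mat_apply_lower_bound[OF st' i uz])
  ultimately show "h' z - h z < h' i - h i" using key[OF i] g' unfolding \<Delta>_def u_def by linarith
qed

lemma improving_det_policy:
  assumes \<pi>: "\<pi> \<in> det_policies d" and sol: "poisson_sol d (Qpol \<pi>) (pol_reward A0 A1 \<pi>) g h"
    and not_bellman: "\<not> bellman A0 A1 g h"
  obtains \<pi>' i0 where "\<pi>' \<in> det_policies d"
    and "\<And>i. i \<in> {1..d} \<Longrightarrow> g + h i \<le> pol_reward A0 A1 \<pi>' i + mat_apply d (Qpol \<pi>') h i"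
    and "\<And>i. i \<in> {1..d} \<Longrightarrow> pol_reward A0 A1 \<pi>' i + mat_apply d (Qpol \<pi>') h i = g + h i \<Longrightarrow> \<pi>' i = \<pi> i"
    and "i0 \<in> {1..d}" and "g + h i0 < pol_reward A0 A1 \<pi>' i0 + mat_apply d (Qpol \<pi>') h i0"
proof -
  define V0 where "V0 i = A0 i + mat_apply d P0 h i" for i
  define V1 where "V1 i = A1 i + mat_apply d P1 h i" for i
  have val: "pol_reward A0 A1 \<sigma> i + mat_apply d (Qpol \<sigma>) h i = (if \<sigma> i = 1 then V1 i else V0 i)"
    if "\<sigma> i = 0 \<or> \<sigma> i = 1" for \<sigma> i
    using pol_reward_plus_mat_apply_det[where \<sigma>=\<sigma> and i=i, OF that] unfolding V0_def V1_def by simp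
  have \<pi>01: "\<pi> i = 0 \<or> \<pi> i = 1" for i using det_policies_01[OF \<pi>] .
  have eq: "g + h i = (if \<pi> i = 1 then V1 i else V0 i)" if "i \<in> {1..d}" for i
    using sol that val[OF \<pi>01] unfolding poisson_sol_def by auto
  obtain i0 where i0: "i0 \<in> {1..d}" and "g + h i0 \<noteq> max (V0 i0) (V1 i0)"
    using not_bellman unfolding bellman_def V0_def V1_def by blast
  then have i0_better: "g + h i0 < max (V0 i0) (V1 i0)"
    using eq[OF i0] by (auto simp: less_le split: if_splits)
  define \<pi>' where "\<pi>' i = (if i \<in> {1..d} \<and> g + h i < max (V0 i) (V1 i) then 1 - \<pi> i else \<pi> i)" for i
  have \<pi>': "\<pi>' \<in> det_policies d" using \<pi> unfolding \<pi>'_def det_policies_def by auto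
  have val': "pol_reward A0 A1 \<pi>' i + mat_apply d (Qpol \<pi>') h i = max (V0 i) (V1 i)"
    if "i \<in> {1..d}" for i
    using val[OF det_policies_01[OF \<pi>']] eq[OF that] \<pi>01[of i] that unfolding \<pi>'_def
    by (auto simp: max_def)
  show ?thesis
  proof (rule that[OF \<pi>' _ _ i0])
    show "g + h i \<le> pol_reward A0 A1 \<pi>' i + mat_apply d (Qpol \<pi>') h i" if "i \<in> {1..d}" for i
      using val'[OF that] eq[OF that] by (simp add: max_def)
    show "\<pi>' i = \<pi> i"
      if "i \<in> {1..d}" "pol_reward A0 A1 \<pi>' i + mat_apply d (Qpol \<pi>') h i = g + h i" for i
      using that val' unfolding \<pi>'_def by simp
    show "g + h i0 < pol_reward A0 A1 \<pi>' i0 + mat_apply d (Qpol \<pi>') h i0"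
      using val'[OF i0] i0_better by simp
  qed
qed

lemma normalized_evaluation:
  obtains z G H where "\<And>\<sigma>. policy d \<sigma> \<Longrightarrow> recurrent d (Qpol \<sigma>) (z \<sigma>)"
    and "\<And>\<sigma> \<sigma>'. recurrent d (Qpol \<sigma>) = recurrent d (Qpol \<sigma>') \<Longrightarrow> z \<sigma> = z \<sigma>'"
    and "\<And>\<sigma>. policy d \<sigma> \<Longrightarrow> poisson_sol d (Qpol \<sigma>) (pol_reward A0 A1 \<sigma>) (G \<sigma>) (H \<sigma>)"
    and "\<And>\<sigma>. policy d \<sigma> \<Longrightarrow> H \<sigma> (z \<sigma>) = 0"
proof -
  define z where "z \<sigma> = (LEAST i. recurrent d (Qpol \<sigma>) i)" for \<sigma>
  define normalized where "normalized \<sigma> gh \<longleftrightarrow>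
    snd gh (z \<sigma>) = 0 \<and> poisson_sol d (Qpol \<sigma>) (pol_reward A0 A1 \<sigma>) (fst gh) (snd gh)" for \<sigma> gh
  define G where "G \<sigma> = fst (SOME gh. normalized \<sigma> gh)" for \<sigma>
  define H where "H \<sigma> = snd (SOME gh. normalized \<sigma> gh)" for \<sigma>
  have z: "recurrent d (Qpol \<sigma>) (z \<sigma>)" if "policy d \<sigma>" for \<sigma>
    unfolding z_def by (rule LeastI_ex) (rule Qpol_has_recurrent[OF that])
  have GH: "normalized \<sigma> (G \<sigma>, H \<sigma>)" if \<sigma>: "policy d \<sigma>" for \<sigma>
  proof -
    have "z \<sigma> \<in> {1..d}" using z[OF \<sigma>] unfolding recurrent_def by blast
    then obtain g h where "h (z \<sigma>) = 0 \<and> poisson_sol d (Qpol \<sigma>) (pol_reward A0 A1 \<sigma>) g h"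
      using poisson_sol_exists[OF stochastic_Qpol[OF \<sigma>] single_recurrent_class_Qpol[OF \<sigma>]] by blast
    then have "normalized \<sigma> (g, h)" unfolding normalized_def by simp
    then have "normalized \<sigma> (SOME gh. normalized \<sigma> gh)" by (rule someI)
    then show ?thesis unfolding G_def H_def by simp
  qed
  show ?thesis
  proof (rule that[of z G H])
    show "z \<sigma> = z \<sigma>'" if "recurrent d (Qpol \<sigma>) = recurrent d (Qpol \<sigma>')" for \<sigma> \<sigma>'
      unfolding z_def by (rule arg_cong[where f=Least, OF that])
  qed (use z GH normalized_def in auto)
qed

text \<open>Policy iteration cannot improve on a deterministic policy of maximal gain whose bias,
  normalised at its least recurrent state, has maximal sum; so that policy solves the Bellman
  equation.\<close>

lemma bellman_exists: "\<exists>g h. bellman A0 A1 g h"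
proof -
  obtain z G H where z: "\<And>\<sigma>. policy d \<sigma> \<Longrightarrow> recurrent d (Qpol \<sigma>) (z \<sigma>)"
    and z_eq: "\<And>\<sigma> \<sigma>'. recurrent d (Qpol \<sigma>) = recurrent d (Qpol \<sigma>') \<Longrightarrow> z \<sigma> = z \<sigma>'"
    and sol: "\<And>\<sigma>. policy d \<sigma> \<Longrightarrow> poisson_sol d (Qpol \<sigma>) (pol_reward A0 A1 \<sigma>) (G \<sigma>) (H \<sigma>)"
    and H_z: "\<And>\<sigma>. policy d \<sigma> \<Longrightarrow> H \<sigma> (z \<sigma>) = 0"
    using normalized_evaluation[of A0 A1] by blast
  have "(\<lambda>_. 0) \<in> det_policies d" unfolding det_policies_def by simp
  then obtain \<pi> where \<pi>: "\<pi> \<in> det_policies d"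
    and gain_max: "\<And>\<sigma>. \<sigma> \<in> det_policies d \<Longrightarrow> G \<sigma> \<le> G \<pi>"
    and bias_max: "\<And>\<sigma>. \<sigma> \<in> det_policies d \<Longrightarrow> G \<sigma> = G \<pi> \<Longrightarrow> (\<Sum>i=1..d. H \<sigma> i) \<le> (\<Sum>i=1..d. H \<pi> i)"
    using lex_max_finite[OF finite_det_policies, of d G "\<lambda>\<sigma>. \<Sum>i=1..d. H \<sigma> i"] by blast
  have pol: "policy d \<pi>" by (rule policy_if_det_policies[OF \<pi>])
  show ?thesis
  proof (rule ccontr)
    assume "\<nexists>g h. bellman A0 A1 g h"
    then have "\<not> bellman A0 A1 (G \<pi>) (H \<pi>)" by blast
    then obtain \<pi>' i0 where \<pi>': "\<pi>' \<in> det_policies d"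
      and improving: "\<And>i. i \<in> {1..d} \<Longrightarrow>
        G \<pi> + H \<pi> i \<le> pol_reward A0 A1 \<pi>' i + mat_apply d (Qpol \<pi>') (H \<pi>) i"
      and unchanged: "\<And>i. i \<in> {1..d} \<Longrightarrow>
        pol_reward A0 A1 \<pi>' i + mat_apply d (Qpol \<pi>') (H \<pi>) i = G \<pi> + H \<pi> i \<Longrightarrow> \<pi>' i = \<pi> i"
      and i0: "i0 \<in> {1..d}"
      and strict: "G \<pi> + H \<pi> i0 < pol_reward A0 A1 \<pi>' i0 + mat_apply d (Qpol \<pi>') (H \<pi>) i0"
      using improving_det_policy[OF \<pi> sol[OF pol]] by blast
    have pol': "policy d \<pi>'" by (rule policy_if_det_policies[OF \<pi>'])
    note improvement = policy_improvement[OF pol pol' sol[OF pol'] improving unchanged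
        gain_max[OF \<pi>']]
    have "G \<pi>' = G \<pi>" by (rule improvement(1)) auto
    have "z \<pi>' = z \<pi>" by (rule z_eq, rule improvement(2)) auto
    then have u_z: "H \<pi>' (z \<pi>) - H \<pi> (z \<pi>) = 0" using H_z[OF pol] H_z[OF pol'] by simp
    have "0 \<le> H \<pi>' i - H \<pi> i" if "i \<in> {1..d}" for i
    proof -
      have "H \<pi>' (z \<pi>) - H \<pi> (z \<pi>) \<le> H \<pi>' i - H \<pi> i"
        by (rule improvement(3)[OF _ _ _ z[OF pol] that]) auto
      then show ?thesis using u_z by linarith
    qed
    moreover have "0 < H \<pi>' i0 - H \<pi> i0"
    proof -
      have "H \<pi>' (z \<pi>) - H \<pi> (z \<pi>) < H \<pi>' i0 - H \<pi> i0"
        by (rule improvement(4)[OF _ _ _ z[OF pol] i0]) (auto simp: strict)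
      then show ?thesis using u_z by linarith
    qed
    ultimately have "0 < (\<Sum>i=1..d. H \<pi>' i - H \<pi> i)"
      using i0 by (intro sum_pos2[where i=i0]) auto
    moreover have "(\<Sum>i=1..d. H \<pi>' i) \<le> (\<Sum>i=1..d. H \<pi> i)"
      using bias_max[OF \<pi>'] \<open>G \<pi>' = G \<pi>\<close> by simp
    ultimately show False by (simp add: sum_subtractf)
  qed
qed

definition poisson_pair :: "(nat \<Rightarrow> real) \<Rightarrow> (nat \<Rightarrow> real) \<Rightarrow> real \<times> (nat \<Rightarrow> real)" where
  "poisson_pair \<sigma> f = (SOME gh. poisson_sol d (Qpol \<sigma>) f (fst gh) (snd gh))"

lemma poisson_sol_poisson_pair:
  assumes "policy d \<sigma>"
  shows "poisson_sol d (Qpol \<sigma>) f (fst (poisson_pair \<sigma> f)) (snd (poisson_pair \<sigma> f))"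
proof -
  have "1 \<in> {1..d}" using nonempty_states by simp
  then obtain g h where "poisson_sol d (Qpol \<sigma>) f g h"
    using poisson_sol_exists[OF stochastic_Qpol[OF assms] single_recurrent_class_Qpol[OF assms]] by blast
  then have "poisson_sol d (Qpol \<sigma>) f (fst (g, h)) (snd (g, h))" by simp
  then show ?thesis unfolding poisson_pair_def by (rule someI)
qed

end

section \<open>The Whittle index\<close>

locale restless_bandit = unichain_mdp +
  fixes R0 R1 :: "nat \<Rightarrow> real"
begin

lemma bellman_sol_iff: "bellman_sol d P0 P1 R0 R1 \<nu> g h \<longleftrightarrow> bellman (\<lambda>i. R0 i + \<nu>) R1 g h"
  unfolding bellman_sol_def bellman_def mat_apply_def by simp

lemma bellman_sol_exists: "\<exists>g h. bellman_sol d P0 P1 R0 R1 \<nu> g h"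
  unfolding bellman_sol_iff by (rule bellman_exists)

definition passive_adv :: "real \<Rightarrow> (nat \<Rightarrow> real) \<Rightarrow> nat \<Rightarrow> real" where
  "passive_adv \<nu> h i = (R0 i + \<nu> + mat_apply d P0 h i) - (R1 i + mat_apply d P1 h i)"

lemma passive_adv_shift:
  assumes "\<And>j. j \<in> {1..d} \<Longrightarrow> h' j = h j + c" "i \<in> {1..d}"
  shows "passive_adv \<nu> h' i = passive_adv \<nu> h i"
  unfolding passive_adv_def
  using mat_apply_shift[OF stochastic_P0 assms(2,1)] mat_apply_shift[OF stochastic_P1 assms(2,1)] by simp

lemma mem_omega_iff:
  assumes sol: "bellman_sol d P0 P1 R0 R1 \<nu> g h" and i: "i \<in> {1..d}"
  shows "i \<in> omega d P0 P1 R0 R1 \<nu> \<longleftrightarrow> 0 \<le> passive_adv \<nu> h i"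
proof
  assume "i \<in> omega d P0 P1 R0 R1 \<nu>"
  then obtain g' h' where sol': "bellman_sol d P0 P1 R0 R1 \<nu> g' h'" and "0 \<le> passive_adv \<nu> h' i"
    unfolding omega_def passive_adv_def mat_apply_def by auto
  moreover obtain c where "\<forall>j\<in>{1..d}. h' j = h j + c"
    using bellman_unique(2)[OF sol'[unfolded bellman_sol_iff] sol[unfolded bellman_sol_iff]] by blast
  ultimately show "0 \<le> passive_adv \<nu> h i" using passive_adv_shift[OF _ i] by simp
next
  assume "0 \<le> passive_adv \<nu> h i"
  then show "i \<in> omega d P0 P1 R0 R1 \<nu>"
    using sol i unfolding omega_def passive_adv_def mat_apply_def by auto
qed

lemma passive_adv_add: "passive_adv (\<nu> + c) h i = passive_adv \<nu> h i + c"
  unfolding passive_adv_def by simp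

lemma poisson_sol_constant_action:
  obtains g0 h0 g1 h1 where "poisson_sol d P0 R0 g0 h0" and "poisson_sol d P1 R1 g1 h1"
proof -
  have "pol_matrix P0 P1 (\<lambda>_. 0) = P0" "pol_matrix P0 P1 (\<lambda>_. 1) = P1"
    and "pol_reward R0 R1 (\<lambda>_. 0) = R0" "pol_reward R0 R1 (\<lambda>_. 1) = R1"
    by (simp_all add: pol_matrix_def pol_reward_def fun_eq_iff)
  moreover have "policy d (\<lambda>_. 0)" "policy d (\<lambda>_. 1)" by (simp_all add: policy_def)
  ultimately show ?thesis
    using that poisson_sol_poisson_pair[of "\<lambda>_. 0" R0] poisson_sol_poisson_pair[of "\<lambda>_. 1" R1] by metis
qed

lemma mem_omega_large_subsidy:
  assumes i: "i \<in> {1..d}"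
  shows "\<exists>\<nu>. i \<in> omega d P0 P1 R0 R1 \<nu>"
proof -
  obtain g h where sol: "poisson_sol d P0 R0 g h" using poisson_sol_constant_action by metis
  define K where "K = (\<Sum>j=1..d. \<bar>passive_adv 0 h j\<bar>)"
  have adv: "0 \<le> passive_adv K h j" if "j \<in> {1..d}" for j
  proof -
    have "\<bar>passive_adv 0 h j\<bar> \<le> K" unfolding K_def by (rule member_le_sum) (use that in auto)
    then show ?thesis using passive_adv_add[of 0 K h j] by simp
  qed
  have "bellman_sol d P0 P1 R0 R1 K (g + K) h"
    unfolding bellman_sol_iff bellman_def
  proof
    fix j assume j: "j \<in> {1..d}"
    have "g + h j = R0 j + mat_apply d P0 h j" using sol j unfolding poisson_sol_def by blast
    then show "g + K + h j = max (R0 j + K + mat_apply d P0 h j) (R1 j + mat_apply d P1 h j)"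
      using adv[OF j] unfolding passive_adv_def by (simp add: max_def)
  qed
  then show ?thesis using mem_omega_iff adv i by blast
qed

lemma bdd_below_omega:
  assumes i: "i \<in> {1..d}"
  shows "bdd_below {\<nu>. i \<in> omega d P0 P1 R0 R1 \<nu>}"
proof -
  obtain g h where sol: "poisson_sol d P1 R1 g h" using poisson_sol_constant_action by metis
  define K where "K = (\<Sum>j=1..d. \<bar>passive_adv 0 h j\<bar>)"
  have "- K \<le> \<nu>" if "i \<in> omega d P0 P1 R0 R1 \<nu>" for \<nu>
  proof (rule ccontr)
    assume "\<not> - K \<le> \<nu>"
    then have adv: "passive_adv \<nu> h j < 0" if "j \<in> {1..d}" for j
    proof -
      have "\<bar>passive_adv 0 h j\<bar> \<le> K" unfolding K_def by (rule member_le_sum) (use that in auto)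
      then show ?thesis using passive_adv_add[of 0 \<nu> h j] \<open>\<not> - K \<le> \<nu>\<close> by simp
    qed
    have "bellman_sol d P0 P1 R0 R1 \<nu> g h"
      unfolding bellman_sol_iff bellman_def
    proof
      fix j assume j: "j \<in> {1..d}"
      have "g + h j = R1 j + mat_apply d P1 h j" using sol j unfolding poisson_sol_def by blast
      then show "g + h j = max (R0 j + \<nu> + mat_apply d P0 h j) (R1 j + mat_apply d P1 h j)"
        using adv[OF j] unfolding passive_adv_def by (simp add: max_def)
    qed
    then show False using mem_omega_iff[OF _ i] adv[OF i] that by fastforce
  qed
  then show ?thesis by (intro bdd_belowI[of _ "- K"]) blast
qed

lemma whittle_index_le:
  assumes "i \<in> {1..d}" "i \<in> omega d P0 P1 R0 R1 \<nu>"
  shows "whittle_index d P0 P1 R0 R1 i \<le> \<nu>"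
  unfolding whittle_index_def by (rule cInf_lower) (use assms bdd_below_omega in auto)

lemma mem_omega_if_whittle_index_less:
  assumes "indexable d P0 P1 R0 R1" "i \<in> {1..d}" "whittle_index d P0 P1 R0 R1 i < \<nu>"
  shows "i \<in> omega d P0 P1 R0 R1 \<nu>"
proof -
  obtain \<mu> where "i \<in> omega d P0 P1 R0 R1 \<mu>" "\<mu> < \<nu>"
    using cInf_lessD[of "{\<nu>. i \<in> omega d P0 P1 R0 R1 \<nu>}"] mem_omega_large_subsidy[OF assms(2)] assms(3)
    unfolding whittle_index_def by auto
  moreover have "omega d P0 P1 R0 R1 \<mu> \<subseteq> omega d P0 P1 R0 R1 \<nu>"
    using assms(1) \<open>\<mu> < \<nu>\<close> unfolding indexable_def by simp
  ultimately show ?thesis by blast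
qed

text \<open>Evaluation pairs of a fixed policy under subsidy \<nu>, chosen affine (hence continuous) in \<nu>.\<close>

definition subsidy_gain :: "(nat \<Rightarrow> real) \<Rightarrow> real \<Rightarrow> real" where
  "subsidy_gain \<sigma> \<nu> = fst (poisson_pair \<sigma> (pol_reward R0 R1 \<sigma>)) + \<nu> * fst (poisson_pair \<sigma> (\<lambda>i. 1 - \<sigma> i))"

definition subsidy_bias :: "(nat \<Rightarrow> real) \<Rightarrow> real \<Rightarrow> nat \<Rightarrow> real" where
  "subsidy_bias \<sigma> \<nu> j = snd (poisson_pair \<sigma> (pol_reward R0 R1 \<sigma>)) j + \<nu> * snd (poisson_pair \<sigma> (\<lambda>i. 1 - \<sigma> i)) j"

lemma poisson_sol_subsidy:
  assumes "policy d \<sigma>"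
  shows "poisson_sol d (Qpol \<sigma>) (pol_reward (\<lambda>i. R0 i + \<nu>) R1 \<sigma>) (subsidy_gain \<sigma> \<nu>) (subsidy_bias \<sigma> \<nu>)"
proof -
  have "pol_reward (\<lambda>i. R0 i + \<nu>) R1 \<sigma> = (\<lambda>i. pol_reward R0 R1 \<sigma> i + \<nu> * (1 - \<sigma> i))"
    unfolding pol_reward_def by (simp add: fun_eq_iff algebra_simps)
  then show ?thesis
    using poisson_sol_add_scaled[OF poisson_sol_poisson_pair[OF assms] poisson_sol_poisson_pair[OF assms]]
    unfolding subsidy_gain_def subsidy_bias_def[abs_def] by simp
qed

lemma bellman_sol_subsidy_greedy:
  assumes sol: "bellman_sol d P0 P1 R0 R1 \<nu> g h" and s: "s \<in> {1..d}"
  defines "\<sigma> \<equiv> greedy (\<lambda>i. R0 i + \<nu>) R1 h"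
  shows "bellman_sol d P0 P1 R0 R1 \<nu> (subsidy_gain \<sigma> \<nu>) (subsidy_bias \<sigma> \<nu>)"
    and "passive_adv \<nu> (subsidy_bias \<sigma> \<nu>) s = passive_adv \<nu> h s"
proof -
  have \<sigma>: "policy d \<sigma>" unfolding \<sigma>_def by (rule policy_if_det_policies[OF greedy_det_policies])
  have greedy_sol: "poisson_sol d (Qpol \<sigma>) (pol_reward (\<lambda>i. R0 i + \<nu>) R1 \<sigma>) g h"
    unfolding \<sigma>_def by (rule poisson_sol_greedy[OF sol[unfolded bellman_sol_iff]])
  note unique = poisson_sol_unique[OF stochastic_Qpol[OF \<sigma>] single_recurrent_class_Qpol[OF \<sigma>]
      nonempty_states greedy_sol poisson_sol_subsidy[OF \<sigma>]]
  obtain c where c: "\<forall>j\<in>{1..d}. subsidy_bias \<sigma> \<nu> j = h j + c" using unique(2) by blast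
  show "bellman_sol d P0 P1 R0 R1 \<nu> (subsidy_gain \<sigma> \<nu>) (subsidy_bias \<sigma> \<nu>)"
    unfolding unique(1) bellman_sol_iff using bellman_shift[OF sol[unfolded bellman_sol_iff]] c by blast
  show "passive_adv \<nu> (subsidy_bias \<sigma> \<nu>) s = passive_adv \<nu> h s"
    using passive_adv_shift[OF _ s] c by blast
qed

lemma closed_bellman_sol_passive_adv:
  assumes T: "closed T" and s: "s \<in> {1..d}"
  shows "closed {\<nu>. \<exists>g h. bellman_sol d P0 P1 R0 R1 \<nu> g h \<and> passive_adv \<nu> h s \<in> T}"
proof -
  define A where "A \<sigma> = {\<nu>. \<forall>i\<in>{1..d}. subsidy_gain \<sigma> \<nu> + subsidy_bias \<sigma> \<nu> i
      = max (R0 i + \<nu> + mat_apply d P0 (subsidy_bias \<sigma> \<nu>) i) (R1 i + mat_apply d P1 (subsidy_bias \<sigma> \<nu>) i)}"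
    for \<sigma>
  define B where "B \<sigma> = (\<lambda>\<nu>. passive_adv \<nu> (subsidy_bias \<sigma> \<nu>) s) -` T" for \<sigma>
  have "{\<nu>. \<exists>g h. bellman_sol d P0 P1 R0 R1 \<nu> g h \<and> passive_adv \<nu> h s \<in> T}
      = (\<Union>\<sigma>\<in>det_policies d. A \<sigma> \<inter> B \<sigma>)"
  proof (intro equalityI subsetI)
    fix \<nu> assume "\<nu> \<in> {\<nu>. \<exists>g h. bellman_sol d P0 P1 R0 R1 \<nu> g h \<and> passive_adv \<nu> h s \<in> T}"
    then obtain g h where sol: "bellman_sol d P0 P1 R0 R1 \<nu> g h" and "passive_adv \<nu> h s \<in> T" by blast
    then show "\<nu> \<in> (\<Union>\<sigma>\<in>det_policies d. A \<sigma> \<inter> B \<sigma>)"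
      using bellman_sol_subsidy_greedy[OF sol s] greedy_det_policies
      unfolding A_def B_def bellman_sol_iff bellman_def by fastforce
  next
    fix \<nu> assume "\<nu> \<in> (\<Union>\<sigma>\<in>det_policies d. A \<sigma> \<inter> B \<sigma>)"
    then show "\<nu> \<in> {\<nu>. \<exists>g h. bellman_sol d P0 P1 R0 R1 \<nu> g h \<and> passive_adv \<nu> h s \<in> T}"
      unfolding A_def B_def bellman_sol_iff bellman_def by blast
  qed
  moreover have "closed (A \<sigma> \<inter> B \<sigma>)" for \<sigma>
  proof
    have "closed {\<nu>. subsidy_gain \<sigma> \<nu> + subsidy_bias \<sigma> \<nu> i
      = max (R0 i + \<nu> + mat_apply d P0 (subsidy_bias \<sigma> \<nu>) i) (R1 i + mat_apply d P1 (subsidy_bias \<sigma> \<nu>) i)}"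
      for i
      unfolding subsidy_gain_def subsidy_bias_def mat_apply_def
      by (intro closed_Collect_eq continuous_intros)
    then show "closed (A \<sigma>)" unfolding A_def Collect_ball_eq by (intro closed_INT) blast
    show "closed (B \<sigma>)"
      unfolding B_def passive_adv_def subsidy_bias_def mat_apply_def
      by (intro closed_vimage T continuous_intros)
  qed
  ultimately show ?thesis using finite_det_policies by (simp add: closed_UN)
qed

text \<open>The subsidies just below (above) the index of s are limits of subsidies where s strictly
  prefers activity (weakly prefers passivity); by closedness both persist at the index itself.\<close>

lemma bellman_sol_at_whittle_index:
  assumes idx: "indexable d P0 P1 R0 R1" and s: "s \<in> {1..d}"
  defines "x \<equiv> whittle_index d P0 P1 R0 R1 s"
  shows "\<exists>g h. bellman_sol d P0 P1 R0 R1 x g h \<and> passive_adv x h s \<in> {..0}"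
    and "\<exists>g h. bellman_sol d P0 P1 R0 R1 x g h \<and> passive_adv x h s \<in> {0..}"
proof -
  define C where "C T = {\<nu>. \<exists>g h. bellman_sol d P0 P1 R0 R1 \<nu> g h \<and> passive_adv \<nu> h s \<in> T}" for T
  have below: "x - inverse (real (Suc n)) \<in> C {..0}" for n
  proof -
    define \<nu> where "\<nu> = x - inverse (real (Suc n))"
    obtain g h where sol: "bellman_sol d P0 P1 R0 R1 \<nu> g h" using bellman_sol_exists by blast
    have "s \<notin> omega d P0 P1 R0 R1 \<nu>" using whittle_index_le[OF s] unfolding \<nu>_def x_def by force
    then show ?thesis using mem_omega_iff[OF sol s] sol unfolding C_def \<nu>_def by force
  qed
  have above: "x + inverse (real (Suc n)) \<in> C {0..}" for n
  proof -
    define \<nu> where "\<nu> = x + inverse (real (Suc n))"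
    obtain g h where sol: "bellman_sol d P0 P1 R0 R1 \<nu> g h" using bellman_sol_exists by blast
    have "s \<in> omega d P0 P1 R0 R1 \<nu>"
      using mem_omega_if_whittle_index_less[OF idx s] unfolding \<nu>_def x_def by simp
    then show ?thesis using mem_omega_iff[OF sol s] sol unfolding C_def \<nu>_def by force
  qed
  have "x \<in> C {..0}"
    using closed_sequentially[OF closed_bellman_sol_passive_adv[OF _ s] below[unfolded C_def]]
      tendsto_diff[OF tendsto_const LIMSEQ_inverse_real_of_nat, of x] unfolding C_def by force
  then show "\<exists>g h. bellman_sol d P0 P1 R0 R1 x g h \<and> passive_adv x h s \<in> {..0}"
    unfolding C_def by blast
  have "x \<in> C {0..}"
    using closed_sequentially[OF closed_bellman_sol_passive_adv[OF _ s] above[unfolded C_def]]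
      tendsto_add[OF tendsto_const LIMSEQ_inverse_real_of_nat, of x] unfolding C_def by force
  then show "\<exists>g h. bellman_sol d P0 P1 R0 R1 x g h \<and> passive_adv x h s \<in> {0..}"
    unfolding C_def by blast
qed

lemma whittle_index_bellman_sol:
  assumes idx: "indexable d P0 P1 R0 R1" and s: "s \<in> {1..d}"
  defines "W \<equiv> whittle_index d P0 P1 R0 R1"
  obtains g h where "bellman_sol d P0 P1 R0 R1 (W s) g h" and "passive_adv (W s) h s = 0"
    and "\<And>i. i \<in> {1..d} \<Longrightarrow> W s < W i \<Longrightarrow> passive_adv (W s) h i < 0"
    and "\<And>i. i \<in> {1..d} \<Longrightarrow> W i < W s \<Longrightarrow> 0 \<le> passive_adv (W s) h i"
proof -
  obtain g h where sol: "bellman_sol d P0 P1 R0 R1 (W s) g h" and "passive_adv (W s) h s \<le> 0"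
    using bellman_sol_at_whittle_index(1)[OF idx s] unfolding W_def by auto
  moreover obtain g' h' where sol': "bellman_sol d P0 P1 R0 R1 (W s) g' h'"
    and "0 \<le> passive_adv (W s) h' s"
    using bellman_sol_at_whittle_index(2)[OF idx s] unfolding W_def by auto
  moreover obtain c where "\<forall>j\<in>{1..d}. h' j = h j + c"
    using bellman_unique(2)[OF sol'[unfolded bellman_sol_iff] sol[unfolded bellman_sol_iff]] by blast
  ultimately have "passive_adv (W s) h s = 0" using passive_adv_shift[OF _ s] by force
  moreover have "passive_adv (W s) h i < 0" if "i \<in> {1..d}" "W s < W i" for i
    using whittle_index_le[OF that(1)] mem_omega_iff[OF sol that(1)] that(2) unfolding W_def by force
  moreover have "0 \<le> passive_adv (W s) h i" if "i \<in> {1..d}" "W i < W s" for i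
    using mem_omega_if_whittle_index_less[OF idx that(1)] mem_omega_iff[OF sol that(1)] that(2)
    unfolding W_def by blast
  ultimately show ?thesis using that sol by blast
qed

end

section \<open>Threshold configurations\<close>

lemma simplex_nonneg: "m \<in> simplex d \<Longrightarrow> i \<in> {1..d} \<Longrightarrow> 0 \<le> m i"
  unfolding simplex_def by auto

lemma simplex_sum: "m \<in> simplex d \<Longrightarrow> (\<Sum>i=1..d. m i) = 1"
  unfolding simplex_def by auto

lemma simplex_nonempty_states: "m \<in> simplex d \<Longrightarrow> 1 \<le> d"
  unfolding simplex_def by (cases d) auto

lemma simplex_partial_sum_mono:
  assumes "m \<in> simplex d" "a < b" "b \<le> d"
  shows "(\<Sum>i=1..a. m i) \<le> (\<Sum>i=1..<b. m i)"
  by (rule sum_mono2) (use assms simplex_nonneg in auto)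

lemma sum_split_at:
  fixes f :: "nat \<Rightarrow> real"
  assumes "s \<in> {1..d}"
  shows "(\<Sum>i=1..d. f i) = (\<Sum>i=1..<s. f i) + f s + (\<Sum>i=Suc s..d. f i)"
proof -
  have "{1..d} = {1..<s} \<union> {s..d}" using assms by auto
  then have "(\<Sum>i=1..d. f i) = (\<Sum>i=1..<s. f i) + (\<Sum>i=s..d. f i)"
    by (simp only:) (rule sum.union_disjoint, auto)
  moreover have "{s..d} = insert s {Suc s..d}" using assms by auto
  ultimately show ?thesis by simp
qed

lemma sum_atLeastAtMost_eq_lessThan_add:
  fixes f :: "nat \<Rightarrow> real"
  assumes "1 \<le> i"
  shows "(\<Sum>j=1..i. f j) = (\<Sum>j=1..<i. f j) + f i"
proof -
  have "{1..i} = insert i {1..<i}" using assms by auto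
  then show ?thesis by simp
qed

lemma s_of_bounds:
  assumes m: "m \<in> simplex d" and "0 < alpha" "alpha < 1"
  shows "s_of d alpha m \<in> {1..d}" and "(\<Sum>i=1..<s_of d alpha m. m i) \<le> alpha"
    and "alpha < (\<Sum>i=1..s_of d alpha m. m i)"
proof -
  define P where "P s \<longleftrightarrow> s \<in> {1..d} \<and> (\<Sum>i=1..<s. m i) \<le> alpha \<and> alpha < (\<Sum>i=1..s. m i)" for s
  have ex: "alpha < (\<Sum>i=1..d. m i)" using simplex_sum[OF m] \<open>alpha < 1\<close> by simp
  define s0 where "s0 = (LEAST k. alpha < (\<Sum>i=1..k. m i))"
  have s0: "alpha < (\<Sum>i=1..s0. m i)" unfolding s0_def by (rule LeastI[of "\<lambda>k. alpha < (\<Sum>i=1..k. m i)", OF ex])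
  have "s0 \<le> d" unfolding s0_def by (rule Least_le[of "\<lambda>k. alpha < (\<Sum>i=1..k. m i)", OF ex])
  have "s0 \<noteq> 0" using s0 \<open>0 < alpha\<close> by (cases s0) auto
  then have "{1..<s0} = {1..s0 - 1}" by auto
  moreover have "\<not> alpha < (\<Sum>i=1..s0 - 1. m i)"
    using not_less_Least[of "s0 - 1" "\<lambda>k. alpha < (\<Sum>i=1..k. m i)"] \<open>s0 \<noteq> 0\<close> unfolding s0_def by simp
  ultimately have P_s0: "P s0" unfolding P_def using s0 \<open>s0 \<le> d\<close> \<open>s0 \<noteq> 0\<close> by auto
  have "s = s0" if "P s" for s
  proof (rule ccontr)
    assume "s \<noteq> s0"
    then consider "s < s0" | "s0 < s" by linarith
    then show False
    proof cases
      case 1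
      then show ?thesis
        using simplex_partial_sum_mono[OF m 1 \<open>s0 \<le> d\<close>] that P_s0 unfolding P_def by linarith
    next
      case 2
      then show ?thesis
        using simplex_partial_sum_mono[OF m 2] that P_s0 unfolding P_def by auto
    qed
  qed
  then have "P (THE s. P s)" by (rule theI[of P s0, OF P_s0])
  moreover have "(THE s. P s) = s_of d alpha m" unfolding s_of_def P_def ..
  ultimately have "P (s_of d alpha m)" by simp
  then show "s_of d alpha m \<in> {1..d}" and "(\<Sum>i=1..<s_of d alpha m. m i) \<le> alpha"
    and "alpha < (\<Sum>i=1..s_of d alpha m. m i)"
    unfolding P_def by auto
qed

lemma higher_index_states:
  fixes \<nu> :: "nat \<Rightarrow> real"
  assumes decreasing: "\<forall>i\<in>{1..d}. \<forall>j\<in>{1..d}. i < j \<longrightarrow> \<nu> i > \<nu> j" and i: "i \<in> {1..d}"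
  shows "{j\<in>{1..d}. \<nu> j > \<nu> i} = {1..<i}"
proof (intro equalityI subsetI)
  fix j assume "j \<in> {j\<in>{1..d}. \<nu> j > \<nu> i}"
  then have j: "j \<in> {1..d}" and gt: "\<nu> i < \<nu> j" by auto
  have "\<not> i \<le> j"
  proof
    assume "i \<le> j"
    then have "\<nu> j \<le> \<nu> i" using decreasing[rule_format, OF i j] by (cases "i = j") auto
    then show False using gt by simp
  qed
  then show "j \<in> {1..<i}" using j by simp
next
  fix j assume j: "j \<in> {1..<i}"
  then have "j \<in> {1..d}" using i by simp
  then show "j \<in> {j\<in>{1..d}. \<nu> j > \<nu> i}" using decreasing[rule_format, OF _ i, of j] j by simp
qed

definition threshold_sum :: "nat \<Rightarrow> real \<Rightarrow> (nat \<Rightarrow> real) \<Rightarrow> (nat \<Rightarrow> real) \<Rightarrow> (nat \<Rightarrow> real) \<Rightarrow> real" where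
  "threshold_sum d alpha m X0 X1 = (let s = s_of d alpha m in
     (\<Sum>i=1..<s. m i * X1 i) + (alpha - (\<Sum>i=1..<s. m i)) * X1 s
     + ((\<Sum>i=1..s. m i) - alpha) * X0 s + (\<Sum>i=Suc s..d. m i * X0 i))"

definition threshold_policy :: "nat \<Rightarrow> real \<Rightarrow> (nat \<Rightarrow> real) \<Rightarrow> nat \<Rightarrow> real" where
  "threshold_policy d alpha m i = (let s = s_of d alpha m in
     if i < s then 1 else if i = s then (alpha - (\<Sum>j=1..<s. m j)) / m s else 0)"

lemma phi_eq_threshold_sum: "phi d P0 P1 alpha m j = threshold_sum d alpha m (\<lambda>i. P0 i j) (\<lambda>i. P1 i j)"
  unfolding phi_def threshold_sum_def ..

context
  fixes d :: nat and alpha :: real and m :: "nat \<Rightarrow> real"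
  assumes m: "m \<in> simplex d" and alpha: "0 < alpha" "alpha < 1"
begin

private abbreviation "s \<equiv> s_of d alpha m"

private lemma sum_upto_s: "(\<Sum>i=1..s. m i) = (\<Sum>i=1..<s. m i) + m s"
  using s_of_bounds(1)[OF m alpha] by (intro sum_atLeastAtMost_eq_lessThan_add) simp

lemma threshold_active_mass:
  "m i * threshold_policy d alpha m i
     = (if i < s then m i else if i = s then alpha - (\<Sum>j=1..<s. m j) else 0)"
proof -
  have "0 < m s" using s_of_bounds[OF m alpha] sum_upto_s by simp
  then show ?thesis unfolding threshold_policy_def Let_def by simp
qed

lemma policy_threshold_policy: "policy d (threshold_policy d alpha m)"
proof -
  have "0 \<le> alpha - (\<Sum>i=1..<s. m i)" "alpha - (\<Sum>i=1..<s. m i) \<le> m s" "0 < m s"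
    using s_of_bounds[OF m alpha] sum_upto_s by auto
  then show ?thesis unfolding policy_def threshold_policy_def Let_def by auto
qed

lemma sum_threshold_policy:
  "(\<Sum>i=1..d. m i * ((1 - threshold_policy d alpha m i) * X0 i + threshold_policy d alpha m i * X1 i))
     = threshold_sum d alpha m X0 X1"
proof -
  have "(\<Sum>i=1..d. m i * ((1 - threshold_policy d alpha m i) * X0 i + threshold_policy d alpha m i * X1 i))
      = (\<Sum>i=1..d. m i * X0 i + m i * threshold_policy d alpha m i * (X1 i - X0 i))"
    by (simp add: algebra_simps)
  also have "\<dots> = (\<Sum>i=1..<s. m i * X1 i) + (alpha - (\<Sum>i=1..<s. m i)) * X1 s
     + ((\<Sum>i=1..<s. m i) + m s - alpha) * X0 s + (\<Sum>i=Suc s..d. m i * X0 i)"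
    unfolding threshold_active_mass sum_split_at[OF s_of_bounds(1)[OF m alpha]]
    by (simp add: algebra_simps)
  also have "\<dots> = threshold_sum d alpha m X0 X1"
    unfolding threshold_sum_def Let_def sum_upto_s ..
  finally show ?thesis .
qed

lemma wip_active_eq_threshold_policy:
  assumes decreasing: "\<forall>i\<in>{1..d}. \<forall>j\<in>{1..d}. i < j \<longrightarrow> \<nu> i > \<nu> j" and i: "i \<in> {1..d}"
  shows "wip_active d \<nu> alpha m i = m i * threshold_policy d alpha m i"
proof -
  have "{j\<in>{1..d}. \<nu> j > \<nu> i} = {1..<i}" by (rule higher_index_states[OF decreasing i])
  then have active: "wip_active d \<nu> alpha m i = min (m i) (max 0 (alpha - (\<Sum>j=1..<i. m j)))"
    unfolding wip_active_def by simp
  have m_i: "0 \<le> m i" using simplex_nonneg[OF m i] .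
  have sum_i: "(\<Sum>j=1..i. m j) = (\<Sum>j=1..<i. m j) + m i"
    using i by (intro sum_atLeastAtMost_eq_lessThan_add) simp
  note s = s_of_bounds[OF m alpha]
  consider "i < s" | "i = s" | "s < i" by linarith
  then show ?thesis
  proof cases
    case 1
    then have "(\<Sum>j=1..i. m j) \<le> alpha"
      using simplex_partial_sum_mono[OF m 1] s by auto
    then show ?thesis unfolding active threshold_active_mass using 1 sum_i m_i by simp
  next
    case 2
    then show ?thesis
      unfolding active threshold_active_mass using s sum_i m_i by auto
  next
    case 3
    then have "alpha < (\<Sum>j=1..<i. m j)"
      using simplex_partial_sum_mono[OF m 3] s i by fastforce
    then show ?thesis unfolding active threshold_active_mass using 3 m_i by simp
  qed
qed

lemma wip_reward_eq_threshold_sum: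
  assumes "\<forall>i\<in>{1..d}. \<forall>j\<in>{1..d}. i < j \<longrightarrow> \<nu> i > \<nu> j"
  shows "wip_reward d \<nu> R0 R1 alpha m = threshold_sum d alpha m R0 R1"
  unfolding wip_reward_def sum_threshold_policy[symmetric]
  by (rule sum.cong) (simp_all add: wip_active_eq_threshold_policy[OF assms] algebra_simps)

lemma threshold_policy_activity: "(\<Sum>i=1..d. m i * threshold_policy d alpha m i) = alpha"
  using sum_threshold_policy[of "\<lambda>_. 0" "\<lambda>_. 1"] unfolding threshold_sum_def Let_def by simp

lemma threshold_policy_stationary:
  assumes "\<forall>j\<in>{1..d}. phi d P0 P1 alpha m j = m j" "j \<in> {1..d}"
  shows "(\<Sum>i=1..d. m i * pol_matrix P0 P1 (threshold_policy d alpha m) i j) = m j"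
  using sum_threshold_policy[of "\<lambda>i. P0 i j" "\<lambda>i. P1 i j"] assms
  unfolding pol_matrix_def phi_eq_threshold_sum by simp

end

section \<open>Optimality of the threshold policy\<close>

context restless_bandit
begin

lemma poisson_sol_if_optimal_actions:
  assumes sol: "bellman_sol d P0 P1 R0 R1 \<nu> g h" and \<sigma>: "policy d \<sigma>"
    and when_active: "\<And>i. i \<in> {1..d} \<Longrightarrow> 0 < \<sigma> i \<Longrightarrow> passive_adv \<nu> h i \<le> 0"
    and when_passive: "\<And>i. i \<in> {1..d} \<Longrightarrow> \<sigma> i < 1 \<Longrightarrow> 0 \<le> passive_adv \<nu> h i"
  shows "poisson_sol d (Qpol \<sigma>) (pol_reward (\<lambda>i. R0 i + \<nu>) R1 \<sigma>) g h"
  unfolding poisson_sol_def pol_reward_plus_mat_apply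
proof
  fix i assume i: "i \<in> {1..d}"
  define V0 where "V0 = R0 i + \<nu> + mat_apply d P0 h i"
  define V1 where "V1 = R1 i + mat_apply d P1 h i"
  have "g + h i = max V0 V1" using sol i unfolding bellman_sol_iff bellman_def V0_def V1_def by simp
  moreover have "0 \<le> \<sigma> i" "\<sigma> i \<le> 1" using \<sigma> i unfolding policy_def by auto
  moreover have "0 < \<sigma> i \<Longrightarrow> V0 \<le> V1" "\<sigma> i < 1 \<Longrightarrow> V1 \<le> V0"
    using when_active[OF i] when_passive[OF i] unfolding passive_adv_def V0_def V1_def by auto
  ultimately show "g + h i = (1 - \<sigma> i) * V0 + \<sigma> i * V1"
    unfolding V0_def[symmetric] V1_def[symmetric]
    by (cases "\<sigma> i = 0"; cases "\<sigma> i = 1") (auto simp: max_def algebra_simps)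
qed

lemma lagrangian_bound:
  assumes sol: "bellman_sol d P0 P1 R0 R1 \<nu> g h" and q: "policy d q" and i0: "i0 \<in> {1..d}"
  shows "longrun_avg d (Qpol q) (pol_reward R0 R1 q) i0 + \<nu> * (1 - longrun_avg d (Qpol q) q i0) \<le> g"
proof -
  obtain g1 h1 g2 h2 where sol1: "poisson_sol d (Qpol q) (pol_reward R0 R1 q) g1 h1"
    and sol2: "poisson_sol d (Qpol q) q g2 h2"
    using poisson_sol_poisson_pair[OF q] by blast
  have st: "stochastic d (Qpol q)" by (rule stochastic_Qpol[OF q])
  define \<delta> where "\<delta> j = (h j - h1 j) + \<nu> * h2 j" for j
  have "mat_apply d (Qpol q) \<delta> i \<le> (g - g1 - \<nu> + \<nu> * g2) + \<delta> i" if i: "i \<in> {1..d}" for i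
  proof -
    have "mat_apply d (Qpol q) \<delta> i = mat_apply d (Qpol q) h i - mat_apply d (Qpol q) h1 i
        + \<nu> * mat_apply d (Qpol q) h2 i"
      unfolding \<delta>_def mat_apply_add_scaled mat_apply_diff ..
    moreover have "pol_reward (\<lambda>i. R0 i + \<nu>) R1 q i + mat_apply d (Qpol q) h i \<le> g + h i"
      using bellman_policy_le[OF sol[unfolded bellman_sol_iff] q i] .
    moreover have "pol_reward (\<lambda>i. R0 i + \<nu>) R1 q i = pol_reward R0 R1 q i + \<nu> - \<nu> * q i"
      unfolding pol_reward_def by (simp add: algebra_simps)
    moreover have "g1 + h1 i = pol_reward R0 R1 q i + mat_apply d (Qpol q) h1 i"
      using sol1 i unfolding poisson_sol_def by blast
    moreover have "\<nu> * (g2 + h2 i) = \<nu> * (q i + mat_apply d (Qpol q) h2 i)"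
      using sol2 i unfolding poisson_sol_def by simp
    ultimately show ?thesis unfolding \<delta>_def by (simp add: algebra_simps)
  qed
  then have "0 \<le> g - g1 - \<nu> + \<nu> * g2" by (rule min_principle_gain_nonneg[OF st nonempty_states])
  moreover have "longrun_avg d (Qpol q) (pol_reward R0 R1 q) i0 = g1" "longrun_avg d (Qpol q) q i0 = g2"
    using longrun_avg_eq_gain[OF st i0] sol1 sol2 by auto
  ultimately show ?thesis by (simp add: algebra_simps)
qed

lemma threshold_policy_optimal:
  assumes idx: "indexable d P0 P1 R0 R1" and m: "m \<in> simplex d" and alpha: "0 < alpha" "alpha < 1"
    and decreasing: "\<forall>i\<in>{1..d}. \<forall>j\<in>{1..d}. i < j \<longrightarrow>
       whittle_index d P0 P1 R0 R1 i > whittle_index d P0 P1 R0 R1 j"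
  defines "\<nu> \<equiv> whittle_index d P0 P1 R0 R1 (s_of d alpha m)" and "pol \<equiv> threshold_policy d alpha m"
  obtains g h where "bellman_sol d P0 P1 R0 R1 \<nu> g h"
    and "poisson_sol d (Qpol pol) (pol_reward (\<lambda>i. R0 i + \<nu>) R1 pol) g h"
proof -
  define W where "W = whittle_index d P0 P1 R0 R1"
  define s where "s = s_of d alpha m"
  have s: "s \<in> {1..d}" using s_of_bounds(1)[OF m alpha] unfolding s_def .
  obtain g h where sol: "bellman_sol d P0 P1 R0 R1 (W s) g h" and adv_s: "passive_adv (W s) h s = 0"
    and adv_lt: "\<And>i. i \<in> {1..d} \<Longrightarrow> W s < W i \<Longrightarrow> passive_adv (W s) h i < 0"
    and adv_gt: "\<And>i. i \<in> {1..d} \<Longrightarrow> W i < W s \<Longrightarrow> 0 \<le> passive_adv (W s) h i"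
    using whittle_index_bellman_sol[OF idx s] unfolding W_def by blast
  have "poisson_sol d (Qpol pol) (pol_reward (\<lambda>i. R0 i + W s) R1 pol) g h"
  proof (rule poisson_sol_if_optimal_actions[OF sol])
    show "policy d pol" unfolding pol_def by (rule policy_threshold_policy[OF m alpha])
    fix i assume i: "i \<in> {1..d}"
    show "passive_adv (W s) h i \<le> 0" if "0 < pol i"
    proof -
      have "i \<le> s" using that unfolding pol_def threshold_policy_def s_def Let_def
        by (auto split: if_splits)
      then show ?thesis
        using adv_s adv_lt[OF i] decreasing i s unfolding W_def by (cases "i = s") auto
    qed
    show "0 \<le> passive_adv (W s) h i" if "pol i < 1"
    proof -
      have "s \<le> i" using that unfolding pol_def threshold_policy_def s_def Let_def
        by (auto split: if_splits)
      then show ?thesis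
        using adv_s adv_gt[OF i] decreasing i s unfolding W_def by (cases "i = s") auto
    qed
  qed
  then show ?thesis using that sol unfolding \<nu>_def W_def s_def by blast
qed

lemma bellman_gain_threshold_sum:
  assumes idx: "indexable d P0 P1 R0 R1" and m: "m \<in> simplex d" and alpha: "0 < alpha" "alpha < 1"
    and decreasing: "\<forall>i\<in>{1..d}. \<forall>j\<in>{1..d}. i < j \<longrightarrow>
       whittle_index d P0 P1 R0 R1 i > whittle_index d P0 P1 R0 R1 j"
    and stationary: "\<And>j. j \<in> {1..d} \<Longrightarrow> (\<Sum>i=1..d. m i * Qpol (threshold_policy d alpha m) i j) = m j"
  obtains \<nu> g h where "bellman_sol d P0 P1 R0 R1 \<nu> g h"
    and "g = threshold_sum d alpha m R0 R1 + \<nu> * (1 - alpha)"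
proof -
  define \<nu> where "\<nu> = whittle_index d P0 P1 R0 R1 (s_of d alpha m)"
  define pol where "pol = threshold_policy d alpha m"
  obtain g h where sol: "bellman_sol d P0 P1 R0 R1 \<nu> g h"
    and "poisson_sol d (Qpol pol) (pol_reward (\<lambda>i. R0 i + \<nu>) R1 pol) g h"
    using threshold_policy_optimal[OF idx m alpha decreasing] unfolding \<nu>_def pol_def by blast
  then have "g = (\<Sum>i=1..d. m i * pol_reward (\<lambda>i. R0 i + \<nu>) R1 pol i)"
    using gain_eq_stationary_average[OF simplex_sum[OF m]] stationary unfolding pol_def by blast
  also have "\<dots> = (\<Sum>i=1..d. m i * pol_reward R0 R1 pol i + \<nu> * m i - \<nu> * (m i * pol i))"
    by (simp add: pol_reward_def algebra_simps)
  also have "\<dots> = (\<Sum>i=1..d. m i * pol_reward R0 R1 pol i) + \<nu> * (1 - (\<Sum>i=1..d. m i * pol i))"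
    using simplex_sum[OF m] by (simp add: sum.distrib sum_subtractf sum_distrib_left[symmetric] right_diff_distrib)
  also have "\<dots> = threshold_sum d alpha m R0 R1 + \<nu> * (1 - alpha)"
    unfolding pol_reward_def pol_def threshold_policy_activity[OF m alpha] sum_threshold_policy[OF m alpha] ..
  finally show ?thesis using that sol by blast
qed

lemma V_rel_eq_threshold_sum:
  assumes idx: "indexable d P0 P1 R0 R1" and m: "m \<in> simplex d" and alpha: "0 < alpha" "alpha < 1"
    and decreasing: "\<forall>i\<in>{1..d}. \<forall>j\<in>{1..d}. i < j \<longrightarrow>
       whittle_index d P0 P1 R0 R1 i > whittle_index d P0 P1 R0 R1 j"
    and fixed_point: "\<forall>j\<in>{1..d}. phi d P0 P1 alpha m j = m j"
  shows "V_rel d P0 P1 R0 R1 alpha = threshold_sum d alpha m R0 R1"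
proof -
  define pol where "pol = threshold_policy d alpha m"
  define S where "S = {longrun_avg d (Qpol q) (pol_reward R0 R1 q) i0 | q i0.
    policy d q \<and> i0 \<in> {1..d} \<and> longrun_avg d (Qpol q) q i0 = alpha}"
  have pol: "policy d pol" unfolding pol_def by (rule policy_threshold_policy[OF m alpha])
  have stationary: "\<And>j. j \<in> {1..d} \<Longrightarrow> (\<Sum>i=1..d. m i * Qpol pol i j) = m j"
    unfolding pol_def by (rule threshold_policy_stationary[OF m alpha fixed_point])
  have i1: "1 \<in> {1..d}" using nonempty_states by simp
  have longrun: "longrun_avg d (Qpol pol) f 1 = (\<Sum>i=1..d. m i * f i)" for f
    by (rule longrun_avg_stationary[OF stochastic_Qpol[OF pol] single_recurrent_class_Qpol[OF pol]
          i1 simplex_sum[OF m] stationary])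
  have "longrun_avg d (Qpol pol) pol 1 = alpha"
    unfolding longrun unfolding pol_def by (rule threshold_policy_activity[OF m alpha])
  moreover have "longrun_avg d (Qpol pol) (pol_reward R0 R1 pol) 1 = threshold_sum d alpha m R0 R1"
    unfolding longrun unfolding pol_reward_def pol_def by (rule sum_threshold_policy[OF m alpha])
  ultimately have "threshold_sum d alpha m R0 R1 \<in> S" unfolding S_def using pol i1 by force
  moreover have "x \<le> threshold_sum d alpha m R0 R1" if "x \<in> S" for x
  proof -
    obtain q i0 where x: "x = longrun_avg d (Qpol q) (pol_reward R0 R1 q) i0" and q: "policy d q"
      and i0: "i0 \<in> {1..d}" and activity: "longrun_avg d (Qpol q) q i0 = alpha"
      using \<open>x \<in> S\<close> unfolding S_def by blast
    obtain \<nu> g h where sol: "bellman_sol d P0 P1 R0 R1 \<nu> g h"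
      and "g = threshold_sum d alpha m R0 R1 + \<nu> * (1 - alpha)"
      using bellman_gain_threshold_sum[OF idx m alpha decreasing stationary[unfolded pol_def]] by blast
    then show ?thesis using lagrangian_bound[OF sol q i0] unfolding x activity by simp
  qed
  ultimately show ?thesis unfolding V_rel_def S_def[symmetric] by (rule cSup_eq_maximum)
qed

end

theorem mainTheorem7:
  fixes d :: nat and P0 P1 :: "nat \<Rightarrow> nat \<Rightarrow> real" and R0 R1 :: "nat \<Rightarrow> real"
    and alpha :: real
  defines "\<nu> \<equiv> whittle_index d P0 P1 R0 R1"
  defines "\<rho> \<equiv> wip_reward d \<nu> R0 R1 alpha"
  assumes "stochastic d P0" and "stochastic d P1"
    and "0 < alpha" and "alpha < 1"
    and "unichain d P0 P1"
    and "strictly_indexable d P0 P1 R0 R1"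
    and "\<forall>i\<in>{1..d}. \<forall>j\<in>{1..d}. i < j \<longrightarrow> \<nu> i > \<nu> j"
  shows "(\<forall>m\<in>simplex d. \<rho> m =
            (let s = s_of d alpha m in
               (\<Sum>i=1..<s. m i * R1 i) + (alpha - (\<Sum>i=1..<s. m i)) * R1 s
               + ((\<Sum>i=1..s. m i) - alpha) * R0 s + (\<Sum>i=Suc s..d. m i * R0 i)))
       \<and> (\<forall>m\<in>simplex d. (\<forall>j\<in>{1..d}. phi d P0 P1 alpha m j = m j) \<longrightarrow>
            \<rho> m = V_rel d P0 P1 R0 R1 alpha)"
proof (intro conjI ballI impI)
  fix m assume m: "m \<in> simplex d"
  have \<rho>_eq: "\<rho> m = threshold_sum d alpha m R0 R1"
    unfolding \<rho>_def by (rule wip_reward_eq_threshold_sum[OF m assms(5,6,9)])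
  then show "\<rho> m = (let s = s_of d alpha m in
               (\<Sum>i=1..<s. m i * R1 i) + (alpha - (\<Sum>i=1..<s. m i)) * R1 s
               + ((\<Sum>i=1..s. m i) - alpha) * R0 s + (\<Sum>i=Suc s..d. m i * R0 i))"
    unfolding threshold_sum_def .
  assume fixed_point: "\<forall>j\<in>{1..d}. phi d P0 P1 alpha m j = m j"
  interpret restless_bandit d P0 P1 R0 R1
    using assms(3,4,7) simplex_nonempty_states[OF m] by unfold_locales
  \<comment> \<open>distinctness of the indices is not needed beyond their assumed strict order\<close>
  have "indexable d P0 P1 R0 R1" using assms(8) unfolding strictly_indexable_def by blast
  from V_rel_eq_threshold_sum[OF this m assms(5,6) assms(9)[unfolded \<nu>_def] fixed_point]
  show "\<rho> m = V_rel d P0 P1 R0 R1 alpha" using \<rho>_eq by simp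
qed

end
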